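(* Let $F_*$ be the category of finite sets, with the injective maps as cofibrations and the bijections as weak equivalences. Then $F_*$ is a pre-cylinder category, and it is the free pre-cylinder category on one object $*$ (the singleton): for every pre-cylinder category $\mathcal D$, evaluation at the singleton gives an equivalence, natural in $\mathcal D$, between the category of morphisms of pre-cylinder categories $F_*\to\mathcal D$ (with natural transformations) and $\mathcal D$; the morphism corresponding to $X\in\mathcal D$ sends a finite set $S$ to the coproduct $\coprod_{s\in S}X$.
   Context: A cofibration category is a category with a class of maps called cofibrations such that isomorphisms are cofibrations, cofibrations are closed under composition, there is an initial object $0$ with every $0\to X$ a cofibration, and pushouts of cofibrations along arbitrary maps exist and are cofibrations. A pre-cylinder category is a cofibration category with an additional class of maps, the weak equivalences, containing isomorphisms, closed under composition, satisfying 2-out-of-6 (if $f,g,h$ composable with $f\circ g$ and $g\circ h$ weak equivalences then $f,g,h,f\circ g\circ h$ are) and the cube lemma: given a natural transformation between spans $B\leftarrow A\rightarrow C$ and $B'\leftarrow A'\rightarrow C'$ whose left legs $A\hookrightarrow B$, $A'\hookrightarrow B'$ are cofibrations and whose three components are weak equivalences, the induced map $B\sqcup_AC\to B'\sqcup_{A'}C'$ is a weak equivalence. A morphism of pre-cylinder categories is a functor preserving cofibrations, weak equivalences, the initial object and pushouts along cofibrations. *)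

theory Defs
  imports Main "HOL-Library.FuncSet"
begin

record ('o,'a) cat =
  obj :: "'o set"
  arr :: "'a set"
  dom :: "'a \<Rightarrow> 'o"
  cod :: "'a \<Rightarrow> 'o"
  cmp :: "'a \<Rightarrow> 'a \<Rightarrow> 'a"   (* cmp C g f = g o f *)
  idt :: "'o \<Rightarrow> 'a"

definition hom :: "('o,'a,'z) cat_scheme \<Rightarrow> 'o \<Rightarrow> 'o \<Rightarrow> 'a set" where
  "hom C X Y = {f \<in> arr C. dom C f = X \<and> cod C f = Y}"

definition category :: "('o,'a,'z) cat_scheme \<Rightarrow> bool" where
  "category C \<longleftrightarrow>
     (\<forall>f\<in>arr C. dom C f \<in> obj C \<and> cod C f \<in> obj C) \<and>
     (\<forall>X\<in>obj C. idt C X \<in> hom C X X) \<and>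
     (\<forall>f\<in>arr C. \<forall>g\<in>arr C. cod C f = dom C g \<longrightarrow> cmp C g f \<in> hom C (dom C f) (cod C g)) \<and>
     (\<forall>f\<in>arr C. cmp C f (idt C (dom C f)) = f \<and> cmp C (idt C (cod C f)) f = f) \<and>
     (\<forall>f\<in>arr C. \<forall>g\<in>arr C. \<forall>h\<in>arr C. cod C f = dom C g \<longrightarrow> cod C g = dom C h \<longrightarrow>
        cmp C h (cmp C g f) = cmp C (cmp C h g) f)"

definition iso :: "('o,'a,'z) cat_scheme \<Rightarrow> 'a \<Rightarrow> bool" where
  "iso C f \<longleftrightarrow> f \<in> arr C \<and> (\<exists>g \<in> hom C (cod C f) (dom C f).
       cmp C g f = idt C (dom C f) \<and> cmp C f g = idt C (cod C f))"

definition initial :: "('o,'a,'z) cat_scheme \<Rightarrow> 'o \<Rightarrow> bool" where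
  "initial C I \<longleftrightarrow> I \<in> obj C \<and> (\<forall>X\<in>obj C. \<exists>!f. f \<in> hom C I X)"

definition pushout :: "('o,'a,'z) cat_scheme \<Rightarrow> 'a \<Rightarrow> 'a \<Rightarrow> 'a \<Rightarrow> 'a \<Rightarrow> bool" where
  "pushout C i f j k \<longleftrightarrow>
     i \<in> arr C \<and> f \<in> arr C \<and> j \<in> arr C \<and> k \<in> arr C \<and>
     dom C i = dom C f \<and> dom C j = cod C i \<and> dom C k = cod C f \<and> cod C j = cod C k \<and>
     cmp C j i = cmp C k f \<and>
     (\<forall>Q\<in>obj C. \<forall>u\<in>hom C (cod C i) Q. \<forall>v\<in>hom C (cod C f) Q.
        cmp C u i = cmp C v f \<longrightarrow>
        (\<exists>!h. h \<in> hom C (cod C j) Q \<and> cmp C h j = u \<and> cmp C h k = v))"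

definition coproduct :: "('o,'a,'z) cat_scheme \<Rightarrow> ('i \<Rightarrow> 'o) \<Rightarrow> 'i set \<Rightarrow> 'o \<Rightarrow> ('i \<Rightarrow> 'a) \<Rightarrow> bool" where
  "coproduct C Xs I P j \<longleftrightarrow>
     P \<in> obj C \<and> (\<forall>s\<in>I. Xs s \<in> obj C \<and> j s \<in> hom C (Xs s) P) \<and>
     (\<forall>Y\<in>obj C. \<forall>g. (\<forall>s\<in>I. g s \<in> hom C (Xs s) Y) \<longrightarrow>
        (\<exists>!h. h \<in> hom C P Y \<and> (\<forall>s\<in>I. cmp C h (j s) = g s)))"

record ('o,'a) pccat = "('o,'a) cat" +
  cof :: "'a set"
  weq :: "'a set"

definition cofibration_category :: "('o,'a,'z) pccat_scheme \<Rightarrow> bool" where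
  "cofibration_category C \<longleftrightarrow>
     category C \<and> cof C \<subseteq> arr C \<and>
     (\<forall>f. iso C f \<longrightarrow> f \<in> cof C) \<and>
     (\<forall>f\<in>cof C. \<forall>g\<in>cof C. cod C f = dom C g \<longrightarrow> cmp C g f \<in> cof C) \<and>
     (\<exists>I. initial C I \<and> (\<forall>X\<in>obj C. \<forall>f\<in>hom C I X. f \<in> cof C)) \<and>
     (\<forall>i\<in>cof C. \<forall>f\<in>arr C. dom C f = dom C i \<longrightarrow> (\<exists>j k. pushout C i f j k)) \<and>
     (\<forall>i f j k. pushout C i f j k \<longrightarrow> i \<in> cof C \<longrightarrow> k \<in> cof C)"

definition pre_cylinder_category :: "('o,'a,'z) pccat_scheme \<Rightarrow> bool" where
  "pre_cylinder_category C \<longleftrightarrow>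
     cofibration_category C \<and> weq C \<subseteq> arr C \<and>
     (\<forall>f. iso C f \<longrightarrow> f \<in> weq C) \<and>
     (\<forall>f\<in>weq C. \<forall>g\<in>weq C. cod C f = dom C g \<longrightarrow> cmp C g f \<in> weq C) \<and>
     \<comment> \<open>2-out-of-6 for composable h, g, f (f o g o h)\<close>
     (\<forall>f\<in>arr C. \<forall>g\<in>arr C. \<forall>h\<in>arr C. cod C h = dom C g \<longrightarrow> cod C g = dom C f \<longrightarrow>
        cmp C f g \<in> weq C \<longrightarrow> cmp C g h \<in> weq C \<longrightarrow>
        f \<in> weq C \<and> g \<in> weq C \<and> h \<in> weq C \<and> cmp C f (cmp C g h) \<in> weq C) \<and>
     \<comment> \<open>cube lemma\<close>
     (\<forall>i f j k i' f' j' k' a b c u.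
        pushout C i f j k \<longrightarrow> pushout C i' f' j' k' \<longrightarrow> i \<in> cof C \<longrightarrow> i' \<in> cof C \<longrightarrow>
        a \<in> hom C (dom C i) (dom C i') \<longrightarrow> b \<in> hom C (cod C i) (cod C i') \<longrightarrow>
        c \<in> hom C (cod C f) (cod C f') \<longrightarrow>
        a \<in> weq C \<longrightarrow> b \<in> weq C \<longrightarrow> c \<in> weq C \<longrightarrow>
        cmp C b i = cmp C i' a \<longrightarrow> cmp C c f = cmp C f' a \<longrightarrow>
        u \<in> hom C (cod C j) (cod C j') \<longrightarrow> cmp C u j = cmp C j' b \<longrightarrow> cmp C u k = cmp C k' c \<longrightarrow>
        u \<in> weq C)"

type_synonym ('o1,'a1,'o2,'a2) ftor = "('o1 \<Rightarrow> 'o2) \<times> ('a1 \<Rightarrow> 'a2)"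

abbreviation fobj :: "('o1,'a1,'o2,'a2) ftor \<Rightarrow> 'o1 \<Rightarrow> 'o2" where "fobj F \<equiv> fst F"
abbreviation farr :: "('o1,'a1,'o2,'a2) ftor \<Rightarrow> 'a1 \<Rightarrow> 'a2" where "farr F \<equiv> snd F"

definition is_functor :: "('o1,'a1,'z1) cat_scheme \<Rightarrow> ('o2,'a2,'z2) cat_scheme \<Rightarrow> ('o1,'a1,'o2,'a2) ftor \<Rightarrow> bool" where
  "is_functor C D F \<longleftrightarrow>
     (\<forall>X\<in>obj C. fobj F X \<in> obj D) \<and>
     (\<forall>f\<in>arr C. farr F f \<in> hom D (fobj F (dom C f)) (fobj F (cod C f))) \<and>
     (\<forall>X\<in>obj C. farr F (idt C X) = idt D (fobj F X)) \<and>
     (\<forall>f\<in>arr C. \<forall>g\<in>arr C. cod C f = dom C g \<longrightarrow> farr F (cmp C g f) = cmp D (farr F g) (farr F f)) \<and>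
     (\<forall>X. X \<notin> obj C \<longrightarrow> fobj F X = undefined) \<and>
     (\<forall>f. f \<notin> arr C \<longrightarrow> farr F f = undefined)"

definition idf :: "('o,'a,'z) cat_scheme \<Rightarrow> ('o,'a,'o,'a) ftor" where
  "idf C = (\<lambda>X. if X \<in> obj C then X else undefined, \<lambda>f. if f \<in> arr C then f else undefined)"

definition fcompose :: "('o1,'a1,'z1) cat_scheme \<Rightarrow> ('o2,'a2,'o3,'a3) ftor \<Rightarrow> ('o1,'a1,'o2,'a2) ftor
    \<Rightarrow> ('o1,'a1,'o3,'a3) ftor" where
  "fcompose C G F = (\<lambda>X. if X \<in> obj C then fobj G (fobj F X) else undefined,
                  \<lambda>f. if f \<in> arr C then farr G (farr F f) else undefined)"

definition natural :: "('o1,'a1,'z1) cat_scheme \<Rightarrow> ('o2,'a2,'z2) cat_scheme \<Rightarrow>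
    ('o1,'a1,'o2,'a2) ftor \<Rightarrow> ('o1,'a1,'o2,'a2) ftor \<Rightarrow> ('o1 \<Rightarrow> 'a2) \<Rightarrow> bool" where
  "natural C D F G \<eta> \<longleftrightarrow>
     (\<forall>X\<in>obj C. \<eta> X \<in> hom D (fobj F X) (fobj G X)) \<and>
     (\<forall>f\<in>arr C. cmp D (\<eta> (cod C f)) (farr F f) = cmp D (farr G f) (\<eta> (dom C f))) \<and>
     (\<forall>X. X \<notin> obj C \<longrightarrow> \<eta> X = undefined)"

definition natiso :: "('o1,'a1,'z1) cat_scheme \<Rightarrow> ('o2,'a2,'z2) cat_scheme \<Rightarrow>
    ('o1,'a1,'o2,'a2) ftor \<Rightarrow> ('o1,'a1,'o2,'a2) ftor \<Rightarrow> ('o1 \<Rightarrow> 'a2) \<Rightarrow> bool" where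
  "natiso C D F G \<eta> \<longleftrightarrow> natural C D F G \<eta> \<and> (\<forall>X\<in>obj C. iso D (\<eta> X))"

definition funcat :: "('o1,'a1,'z1) cat_scheme \<Rightarrow> ('o2,'a2,'z2) cat_scheme \<Rightarrow>
    ('o1,'a1,'o2,'a2) ftor set \<Rightarrow>
    (('o1,'a1,'o2,'a2) ftor,
     ('o1,'a1,'o2,'a2) ftor \<times> ('o1,'a1,'o2,'a2) ftor \<times> ('o1 \<Rightarrow> 'a2)) cat" where
  "funcat C D S =
    \<lparr> obj = S,
      arr = {(F, G, \<eta>). F \<in> S \<and> G \<in> S \<and> natural C D F G \<eta>},
      dom = (\<lambda>(F, G, \<eta>). F),
      cod = (\<lambda>(F, G, \<eta>). G),
      cmp = (\<lambda>(G', H, \<theta>) (F, G, \<eta>). (F, H, \<lambda>X. if X \<in> obj C then cmp D (\<theta> X) (\<eta> X) else undefined)),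
      idt = (\<lambda>F. (F, F, \<lambda>X. if X \<in> obj C then idt D (fobj F X) else undefined)) \<rparr>"

definition quasi_inverse :: "('o1,'a1,'z1) cat_scheme \<Rightarrow> ('o2,'a2,'z2) cat_scheme \<Rightarrow>
    ('o1,'a1,'o2,'a2) ftor \<Rightarrow> ('o2,'a2,'o1,'a1) ftor \<Rightarrow> bool" where
  "quasi_inverse C D F G \<longleftrightarrow>
     is_functor D C G \<and>
     (\<exists>\<eta>. natiso C C (idf C) (fcompose C G F) \<eta>) \<and>
     (\<exists>\<epsilon>. natiso D D (fcompose D F G) (idf D) \<epsilon>)"

definition equivalence_of_categories :: "('o1,'a1,'z1) cat_scheme \<Rightarrow> ('o2,'a2,'z2) cat_scheme \<Rightarrow>
    ('o1,'a1,'o2,'a2) ftor \<Rightarrow> bool" where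
  "equivalence_of_categories C D F \<longleftrightarrow> is_functor C D F \<and> (\<exists>G. quasi_inverse C D F G)"

definition pc_morphism :: "('o1,'a1,'z1) pccat_scheme \<Rightarrow> ('o2,'a2,'z2) pccat_scheme \<Rightarrow>
    ('o1,'a1,'o2,'a2) ftor \<Rightarrow> bool" where
  "pc_morphism C D F \<longleftrightarrow>
     is_functor C D F \<and>
     (\<forall>f\<in>cof C. farr F f \<in> cof D) \<and>
     (\<forall>f\<in>weq C. farr F f \<in> weq D) \<and>
     (\<forall>I. initial C I \<longrightarrow> initial D (fobj F I)) \<and>
     (\<forall>i f j k. pushout C i f j k \<longrightarrow> i \<in> cof C \<longrightarrow>
        pushout D (farr F i) (farr F f) (farr F j) (farr F k))"

definition PCMor where
  "PCMor C D = funcat C D {F. pc_morphism C D F}"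

text \<open>Objects: finite sets (of natural numbers, a skeleton-containing small model of the
  category of finite sets).  Arrows: triples (S, T, f) with f : S -> T extensional.\<close>
type_synonym finarr = "nat set \<times> nat set \<times> (nat \<Rightarrow> nat)"

definition FinSet :: "(nat set, finarr) pccat" where
  "FinSet =
    \<lparr> obj = {S. finite S},
      arr = {(S, T, f). finite S \<and> finite T \<and> f \<in> S \<rightarrow>\<^sub>E T},
      dom = (\<lambda>(S, T, f). S),
      cod = (\<lambda>(S, T, f). T),
      cmp = (\<lambda>(T', U, g) (S, T, f). (S, U, restrict (g \<circ> f) S)),
      idt = (\<lambda>S. (S, S, restrict id S)),
      cof = {(S, T, f). finite S \<and> finite T \<and> f \<in> S \<rightarrow>\<^sub>E T \<and> inj_on f S},
      weq = {(S, T, f). finite S \<and> finite T \<and> f \<in> S \<rightarrow>\<^sub>E T \<and> bij_betw f S T} \<rparr>"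

definition star :: "nat set" where "star = {0}"

definition evf :: "('o,'a,'z) pccat_scheme \<Rightarrow>
   ((nat set,finarr,'o,'a) ftor,
    (nat set,finarr,'o,'a) ftor \<times> (nat set,finarr,'o,'a) ftor \<times> (nat set \<Rightarrow> 'a),
    'o, 'a) ftor" where
  "evf D = (\<lambda>F. if F \<in> obj (PCMor FinSet D) then fobj F star else undefined,
            \<lambda>t. if t \<in> arr (PCMor FinSet D) then (snd (snd t)) star else undefined)"

definition postc :: "('o,'a,'z) pccat_scheme \<Rightarrow> ('o2,'a2,'z2) pccat_scheme \<Rightarrow>
    ('o,'a,'o2,'a2) ftor \<Rightarrow>
   ((nat set,finarr,'o,'a) ftor,
    (nat set,finarr,'o,'a) ftor \<times> (nat set,finarr,'o,'a) ftor \<times> (nat set \<Rightarrow> 'a),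
    (nat set,finarr,'o2,'a2) ftor,
    (nat set,finarr,'o2,'a2) ftor \<times> (nat set,finarr,'o2,'a2) ftor \<times> (nat set \<Rightarrow> 'a2)) ftor" where
  "postc D D' H =
    (\<lambda>F. if F \<in> obj (PCMor FinSet D) then fcompose FinSet H F else undefined,
     \<lambda>t. if t \<in> arr (PCMor FinSet D)
          then (fcompose FinSet H (fst t), fcompose FinSet H (fst (snd t)),
                \<lambda>X. if X \<in> obj FinSet then farr H (snd (snd t) X) else undefined)
          else undefined)"

end

theory Submission
  imports Defs
begin

text \<open>
  In \<open>F\<^sub>*\<close> the weak equivalences are exactly the isomorphisms, and in any cofibration
  category with this property 2-out-of-6 and the cube lemma hold for formal reasons; the remaining
  axioms come from the explicit pushout of finite sets along an injection.

  Freeness rests on the fact that \<open>S \<union> {s}\<close> is the pushout of \<open>{s} \<leftarrow> {} \<rightarrow> S\<close> along a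
  cofibration out of the initial object. A morphism \<open>F : F\<^sub>* \<rightarrow> D\<close> preserves the initial object and
  such pushouts, so by induction on \<open>S\<close> it sends \<open>S\<close> to a coproduct of \<open>|S|\<close> copies
  of \<open>F(*)\<close>.
  Conversely, in a pre-cylinder category binary coproducts exist as pushouts under the initial object,
  and \<open>S \<mapsto> \<Coprod>\<^sub>S X\<close> is a morphism: injections go to coproduct inclusions, which are cofibrations,
  and pushouts along injections go to pushouts. Hence evaluation at \<open>*\<close> is an equivalence with
  quasi-inverse \<open>X \<mapsto> (S \<mapsto> \<Coprod>\<^sub>S X)\<close>, and it commutes on the nose with postcomposition.
\<close>


section \<open>Isomorphisms, coproducts and pushouts\<close>

locale cat =
  fixes C :: "('o,'a,'z) cat_scheme"
  assumes cat: "category C"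
begin

lemma hom_obj: "f \<in> hom C X Y \<Longrightarrow> X \<in> obj C \<and> Y \<in> obj C"
  using cat unfolding category_def hom_def by auto

lemma arr_hom: "f \<in> arr C \<Longrightarrow> f \<in> hom C (dom C f) (cod C f)"
  by (simp add: hom_def)

lemma comp_hom[intro]: "f \<in> hom C X Y \<Longrightarrow> g \<in> hom C Y Z
    \<Longrightarrow> cmp C g f \<in> hom C X Z"
  using cat unfolding category_def hom_def by auto

lemma id_hom[intro]: "X \<in> obj C \<Longrightarrow> idt C X \<in> hom C X X"
  using cat unfolding category_def by auto

lemma id_left: "f \<in> hom C X Y \<Longrightarrow> cmp C (idt C Y) f = f"
  using cat unfolding category_def hom_def by auto

lemma id_right: "f \<in> hom C X Y \<Longrightarrow> cmp C f (idt C X) = f"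
  using cat unfolding category_def hom_def by auto

lemma assoc: "f \<in> hom C X Y \<Longrightarrow> g \<in> hom C Y Z
    \<Longrightarrow> h \<in> hom C Z W \<Longrightarrow> cmp C h (cmp C g f) = cmp C (cmp C h g) f"
  using cat unfolding category_def hom_def by auto

lemma isoI: "f \<in> hom C X Y \<Longrightarrow> g \<in> hom C Y X
    \<Longrightarrow> cmp C g f = idt C X \<Longrightarrow> cmp C f g = idt C Y \<Longrightarrow> iso C f"
  unfolding iso_def hom_def by auto

lemma isoE: assumes "iso C f" "f \<in> hom C X Y"
  obtains g where "g \<in> hom C Y X" "cmp C g f = idt C X" "cmp C f g = idt C Y"
  using assms unfolding iso_def hom_def by auto

lemma iso_id: "X \<in> obj C \<Longrightarrow> iso C (idt C X)"
  using isoI[of "idt C X" X X "idt C X"] id_left[OF id_hom] by auto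

lemma iso_comp: assumes "iso C f" "f \<in> hom C X Y" "iso C g" "g \<in> hom C Y Z"
  shows "iso C (cmp C g f)"
proof -
  from isoE[OF assms(1,2)] obtain f' where f': "f' \<in> hom C Y X" "cmp C f' f = idt C X" "cmp C f f' = idt C Y" .
  from isoE[OF assms(3,4)] obtain g' where g': "g' \<in> hom C Z Y" "cmp C g' g = idt C Y" "cmp C g g' = idt C Z" .
  have "cmp C (cmp C f' g') (cmp C g f) = cmp C f' (cmp C g' (cmp C g f))"
    using assoc[OF comp_hom[OF assms(2) assms(4)] g'(1) f'(1)] by simp
  also have "cmp C g' (cmp C g f) = cmp C (cmp C g' g) f" using assoc[OF assms(2) assms(4) g'(1)] .
  also have "\<dots> = f" using g' id_left[OF assms(2)] by simp
  finally have 1: "cmp C (cmp C f' g') (cmp C g f) = idt C X" using f' by simp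
  have "cmp C (cmp C g f) (cmp C f' g') = cmp C g (cmp C f (cmp C f' g'))"
    using assoc[OF comp_hom[OF g'(1) f'(1)] assms(2) assms(4)] by simp
  also have "cmp C f (cmp C f' g') = cmp C (cmp C f f') g'" using assoc[OF g'(1) f'(1) assms(2)] .
  also have "\<dots> = g'" using f' id_left[OF g'(1)] by simp
  finally have 2: "cmp C (cmp C g f) (cmp C f' g') = idt C Z" using g' by simp
  show ?thesis by (rule isoI[OF _ _ 1 2]) (use assms f' g' in auto)
qed

lemma iso_2_out_of_6:
  assumes h: "h \<in> hom C W X" and g: "g \<in> hom C X Y" and f: "f \<in> hom C Y Z"
    and fg: "iso C (cmp C f g)" and gh: "iso C (cmp C g h)"
  shows "iso C f" "iso C g" "iso C h" "iso C (cmp C f (cmp C g h))"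
proof -
  from isoE[OF fg comp_hom[OF g f]] obtain p where p: "p \<in> hom C Z X"
    "cmp C p (cmp C f g) = idt C X" .
  from isoE[OF gh comp_hom[OF h g]] obtain q where q: "q \<in> hom C Y W"
    "cmp C (cmp C g h) q = idt C Y" .
  define r where "r = cmp C h q"
  have r: "r \<in> hom C Y X" using comp_hom[OF q(1) h] by (simp add: r_def)
  have gr: "cmp C g r = idt C Y"
    using assoc[OF q(1) h g] q(2) by (simp add: r_def)
  have pfg: "cmp C (cmp C p f) g = idt C X"
    using assoc[OF g f p(1)] p(2) by simp
  have "cmp C p f = cmp C (cmp C (cmp C p f) g) r"
    using assoc[OF r g comp_hom[OF f p(1)]] gr id_right[OF comp_hom[OF f p(1)]] by simp
  also have "\<dots> = r" using pfg id_left[OF r] by simp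
  finally have rg: "cmp C r g = idt C X" using pfg by simp
  show iso_g: "iso C g" by (rule isoI[OF g r rg gr])
  have iso_r: "iso C r" by (rule isoI[OF r g gr rg])
  have "cmp C (cmp C f g) r = f"
    using assoc[OF r g f] gr id_right[OF f] by simp
  then show "iso C f" using iso_comp[OF iso_r r fg comp_hom[OF g f]] by simp
  have "cmp C r (cmp C g h) = h"
    using assoc[OF h g r] rg id_left[OF h] by simp
  then show "iso C h" using iso_comp[OF gh comp_hom[OF h g] iso_r r] by simp
  show "iso C (cmp C f (cmp C g h))"
    using iso_comp[OF gh comp_hom[OF h g] \<open>iso C f\<close> f] .
qed

lemma iso_cancel_right: assumes "iso C f" "f \<in> hom C X Y" "h1 \<in> hom C Y Z" "h2 \<in> hom C Y Z"
  "cmp C h1 f = cmp C h2 f" shows "h1 = h2"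
proof -
  from isoE[OF assms(1,2)] obtain f' where f': "f' \<in> hom C Y X" "cmp C f' f = idt C X" "cmp C f f' = idt C Y" .
  have "h1 = cmp C (cmp C h1 f) f'" using assoc[OF f'(1) assms(2) assms(3)] f' id_right[OF assms(3)] by simp
  also have "\<dots> = cmp C (cmp C h2 f) f'" using assms by simp
  also have "\<dots> = h2" using assoc[OF f'(1) assms(2) assms(4)] f' id_right[OF assms(4)] by simp
  finally show ?thesis .
qed

end

definition cop_map :: "('o,'a,'z) cat_scheme \<Rightarrow> 'o \<Rightarrow> ('i \<Rightarrow> 'a)
    \<Rightarrow> 'i set \<Rightarrow> 'o \<Rightarrow> ('i \<Rightarrow> 'a) \<Rightarrow> 'a" where
  "cop_map C P j I Q g = (THE h. h \<in> hom C P Q \<and> (\<forall>s\<in>I. cmp C h (j s) = g s))"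

definition binary_coproduct :: "('o,'a,'z) cat_scheme \<Rightarrow> 'o \<Rightarrow> 'o
    \<Rightarrow> 'o \<Rightarrow> 'a \<Rightarrow> 'a \<Rightarrow> bool" where
  "binary_coproduct C A B P p q \<longleftrightarrow> P \<in> obj C \<and> p \<in> hom C A P
      \<and> q \<in> hom C B P \<and> (\<forall>Q\<in>obj C. \<forall>u\<in>hom C A Q. \<forall>v\<in>hom C B
      Q. \<exists>!h. h \<in> hom C P Q \<and> cmp C h p = u \<and> cmp C h q = v)"

context cat begin

lemma coproduct_inj: "coproduct C Xs I P j \<Longrightarrow> s \<in> I \<Longrightarrow> j s \<in> hom C (Xs s) P"
  unfolding coproduct_def by auto

lemma coproduct_obj: "coproduct C Xs I P j \<Longrightarrow> P \<in> obj C"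
  unfolding coproduct_def by auto

lemma coproduct_univ: assumes "coproduct C Xs I P j" "Y \<in> obj C" "\<forall>s\<in>I. g s \<in> hom C (Xs s) Y"
  shows "\<exists>!h. h \<in> hom C P Y \<and> (\<forall>s\<in>I. cmp C h (j s) = g s)"
proof -
  have "\<forall>Y\<in>obj C. \<forall>g. (\<forall>s\<in>I. g s \<in> hom C (Xs s) Y)
      \<longrightarrow> (\<exists>!h. h \<in> hom C P Y \<and> (\<forall>s\<in>I. cmp C h (j s) = g s))"
    using assms(1) unfolding coproduct_def by (elim conjE)
  thus ?thesis using assms(2,3) by blast
qed

lemma cop_map_spec: assumes "coproduct C Xs I P j" "Q \<in> obj C" "\<forall>s\<in>I. g s \<in> hom C (Xs s) Q"
  shows "cop_map C P j I Q g \<in> hom C P Q" "\<forall>s\<in>I. cmp C (cop_map C P j I Q g) (j s) = g s"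
proof -
  have "\<exists>!h. h \<in> hom C P Q \<and> (\<forall>s\<in>I. cmp C h (j s) = g s)"
    using coproduct_univ[OF assms] .
  from theI'[OF this] show "cop_map C P j I Q g \<in> hom C P Q"
      "\<forall>s\<in>I. cmp C (cop_map C P j I Q g) (j s) = g s"
    unfolding cop_map_def by auto
qed

lemma cop_map_unique: assumes "coproduct C Xs I P j" "h \<in> hom C P Q" "\<forall>s\<in>I. cmp C h (j s) = g s"
  shows "h = cop_map C P j I Q g"
proof -
  have Q: "Q \<in> obj C" using assms hom_obj by auto
  have g: "\<forall>s\<in>I. g s \<in> hom C (Xs s) Q"
      using assms(3) comp_hom[OF coproduct_inj[OF assms(1)] assms(2)] by auto
  have "\<exists>!h. h \<in> hom C P Q \<and> (\<forall>s\<in>I. cmp C h (j s) = g s)"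
    using coproduct_univ[OF assms(1) Q g] .
  from the1_equality[OF this] show ?thesis unfolding cop_map_def using assms(2,3) by simp
qed

lemma coproduct_arr_eqI: assumes "coproduct C Xs I P j" "h1 \<in> hom C P Q" "h2 \<in> hom C P Q"
  "\<forall>s\<in>I. cmp C h1 (j s) = cmp C h2 (j s)" shows "h1 = h2"
  using cop_map_unique[OF assms(1,2), of "\<lambda>s. cmp C h2 (j s)"] cop_map_unique[OF assms(1,3), of
      "\<lambda>s. cmp C h2 (j s)"] assms(4)
  by auto

lemma coproduct_comp_arr_eqI:
  assumes "coproduct C Xs I P j" "p \<in> hom C P Q" "h1 \<in> hom C Q Y" "h2 \<in> hom C Q Y"
    and "\<forall>s\<in>I. cmp C h1 (cmp C p (j s)) = cmp C h2 (cmp C p (j s))"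
  shows "cmp C h1 p = cmp C h2 p"
  using assms(5) assoc[OF coproduct_inj[OF assms(1)] assms(2) assms(3)]
    assoc[OF coproduct_inj[OF assms(1)] assms(2) assms(4)]
  by (intro coproduct_arr_eqI[OF assms(1) comp_hom[OF assms(2,3)] comp_hom[OF assms(2,4)]]) simp

lemma coproductI:
  assumes "P \<in> obj C" "\<forall>s\<in>I. Xs s \<in> obj C \<and> j s \<in> hom C (Xs s) P"
   "\<And>Y g. Y \<in> obj C \<Longrightarrow> \<forall>s\<in>I. g s \<in> hom C (Xs s) Y
       \<Longrightarrow> \<exists>h. h \<in> hom C P Y \<and> (\<forall>s\<in>I. cmp C h (j s) = g s)"
   "\<And>Y h1 h2. h1 \<in> hom C P Y \<Longrightarrow> h2 \<in> hom C P Y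
       \<Longrightarrow> \<forall>s\<in>I. cmp C h1 (j s) = cmp C h2 (j s) \<Longrightarrow> h1 = h2"
  shows "coproduct C Xs I P j"
  unfolding coproduct_def
proof (intro conjI ballI allI impI)
  fix Y g assume Y: "Y \<in> obj C" "\<forall>s\<in>I. g s \<in> hom C (Xs s) Y"
  from assms(3)[OF Y] obtain h where h: "h \<in> hom C P Y" "\<forall>s\<in>I. cmp C h (j s) = g s" by blast
  show "\<exists>!h. h \<in> hom C P Y \<and> (\<forall>s\<in>I. cmp C h (j s) = g s)"
  proof (rule ex1I[where a=h])
    show "h \<in> hom C P Y \<and> (\<forall>s\<in>I. cmp C h (j s) = g s)" using h by blast
    fix h' assume "h' \<in> hom C P Y \<and> (\<forall>s\<in>I. cmp C h' (j s) = g s)"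
    thus "h' = h" using assms(4)[of h' Y h] h by auto
  qed
qed (use assms(1,2) in auto)

lemma coproduct_cong: assumes "coproduct C Xs I P j" "\<forall>s\<in>I. j' s = j s"
    "\<forall>s\<in>I. Xs' s = Xs s"
  shows "coproduct C Xs' I P j'"
proof (rule coproductI)
  show "P \<in> obj C" using coproduct_obj assms by auto
  show "\<forall>s\<in>I. Xs' s \<in> obj C \<and> j' s \<in> hom C (Xs' s) P" using assms
      unfolding coproduct_def by auto
  fix Y g assume "Y \<in> obj C" "\<forall>s\<in>I. g s \<in> hom C (Xs' s) Y"
  thus "\<exists>h. h \<in> hom C P Y \<and> (\<forall>s\<in>I. cmp C h (j' s) = g s)"
    using cop_map_spec[OF assms(1), of Y g] assms by auto
next
  fix Y h1 h2 assume "h1 \<in> hom C P Y" "h2 \<in> hom C P Y" "\<forall>s\<in>I. cmp C h1 (j' s) = cmp C h2 (j' s)"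
  thus "h1 = h2" using coproduct_arr_eqI[OF assms(1)] assms by auto
qed

lemma coproduct_empty: "initial C P \<Longrightarrow> coproduct C Xs {} P j"
  unfolding initial_def coproduct_def by auto

lemma coproduct_empty_initial: "coproduct C Xs {} P j \<Longrightarrow> initial C P"
  unfolding initial_def coproduct_def by auto

lemma coproduct_singleton: assumes "X \<in> obj C" shows "coproduct C (\<lambda>_. X) {s} X (\<lambda>_. idt C X)"
proof (rule coproductI)
  fix Y g assume "\<forall>t\<in>{s}. g t \<in> hom C X Y"
  thus "\<exists>h. h \<in> hom C X Y \<and> (\<forall>t\<in>{s}. cmp C h (idt C X) = g t)"
      using id_right by auto
next
  fix Y h1 h2 assume "h1 \<in> hom C X Y" "h2 \<in> hom C X Y"
      "\<forall>t\<in>{s}. cmp C h1 (idt C X) = cmp C h2 (idt C X)"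
  thus "h1 = h2" using id_right by auto
qed (use assms in auto)

lemma coproduct_iso: assumes "coproduct C Xs I P j" "iso C \<phi>" "\<phi> \<in> hom C P P'"
  shows "coproduct C Xs I P' (\<lambda>s. cmp C \<phi> (j s))"
proof -
  from isoE[OF assms(2,3)] obtain \<psi> where \<psi>: "\<psi> \<in> hom C P' P"
      "cmp C \<psi> \<phi> = idt C P" "cmp C \<phi> \<psi> = idt C P'" .
  show ?thesis
  proof (rule coproductI)
    show "P' \<in> obj C" using assms hom_obj by auto
    show "\<forall>s\<in>I. Xs s \<in> obj C \<and> cmp C \<phi> (j s) \<in> hom C (Xs s) P'"
        using assms unfolding coproduct_def by auto
  next
    fix Y g assume Y: "Y \<in> obj C" "\<forall>s\<in>I. g s \<in> hom C (Xs s) Y"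
    let ?h = "cop_map C P j I Y g"
    have "cmp C ?h \<psi> \<in> hom C P' Y" using cop_map_spec[OF assms(1) Y] \<psi> by auto
    moreover have "\<forall>s\<in>I. cmp C (cmp C ?h \<psi>) (cmp C \<phi> (j s)) = g s"
    proof
      fix s assume s: "s \<in> I"
      have js: "j s \<in> hom C (Xs s) P" using coproduct_inj[OF assms(1) s] .
      have hh: "?h \<in> hom C P Y" using cop_map_spec[OF assms(1) Y] by auto
      have "cmp C (cmp C ?h \<psi>) (cmp C \<phi> (j s)) = cmp C ?h (cmp C \<psi> (cmp C \<phi> (j s)))"
        using assoc[OF comp_hom[OF js assms(3)] \<psi>(1) hh] by simp
      also have "cmp C \<psi> (cmp C \<phi> (j s)) = cmp C (cmp C \<psi> \<phi>) (j s)" using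
          assoc[OF js assms(3) \<psi>(1)] .
      finally have "cmp C (cmp C ?h \<psi>) (cmp C \<phi> (j s)) = cmp C ?h (cmp C (cmp C \<psi> \<phi>) (j s))" .
      thus "cmp C (cmp C ?h \<psi>) (cmp C \<phi> (j s)) = g s"
          using \<psi> cop_map_spec[OF assms(1) Y] s coproduct_inj[OF assms(1) s]
        by (simp add: id_left)
    qed
    ultimately show "\<exists>h. h \<in> hom C P' Y
        \<and> (\<forall>s\<in>I. cmp C h (cmp C \<phi> (j s)) = g s)" by blast
  next
    fix Y h1 h2 assume h: "h1 \<in> hom C P' Y" "h2 \<in> hom C P' Y"
        "\<forall>s\<in>I. cmp C h1 (cmp C \<phi> (j s)) = cmp C h2 (cmp C \<phi> (j s))"
    have "cmp C h1 \<phi> = cmp C h2 \<phi>"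
      apply (rule coproduct_arr_eqI[OF assms(1)])
      using h assms(3) apply auto[2]
      using h(3) assoc[OF coproduct_inj[OF assms(1)] assms(3) h(1)] assoc[OF coproduct_inj[OF assms(1)] assms(3) h(2)] by auto
    thus "h1 = h2" using iso_cancel_right[OF assms(2,3) h(1,2)] by simp
  qed
qed

lemma coproduct_singleton_iso:
  assumes "iso C \<phi>" "\<phi> \<in> hom C X Y"
  shows "coproduct C (\<lambda>_. X) {s} Y (\<lambda>_. \<phi>)"
proof -
  have "X \<in> obj C" using hom_obj[OF assms(2)] by simp
  from coproduct_iso[OF coproduct_singleton[OF this] assms]
  show ?thesis by (rule coproduct_cong) (use id_right[OF assms(2)] in simp_all)
qed

lemma coproduct_comparison: assumes "coproduct C Xs I P j" "coproduct C Xs I P' j'"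
  shows "iso C (cop_map C P j I P' j')" "cop_map C P j I P' j' \<in> hom C P P'"
    "\<forall>s\<in>I. cmp C (cop_map C P j I P' j') (j s) = j' s"
proof -
  let ?h = "cop_map C P j I P' j'" and ?k = "cop_map C P' j' I P j"
  have h: "?h \<in> hom C P P'" "\<forall>s\<in>I. cmp C ?h (j s) = j' s"
    using cop_map_spec[OF assms(1) coproduct_obj[OF assms(2)], of j'] coproduct_inj[OF assms(2)] by auto
  have k: "?k \<in> hom C P' P" "\<forall>s\<in>I. cmp C ?k (j' s) = j s"
    using cop_map_spec[OF assms(2) coproduct_obj[OF assms(1)], of j] coproduct_inj[OF assms(1)] by auto
  have 1: "cmp C ?k ?h = idt C P"
  proof (rule coproduct_arr_eqI[OF assms(1)])
    show "cmp C ?k ?h \<in> hom C P P" using h k by auto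
    show "idt C P \<in> hom C P P" using coproduct_obj[OF assms(1)] by auto
    show "\<forall>s\<in>I. cmp C (cmp C ?k ?h) (j s) = cmp C (idt C P) (j s)"
    proof
      fix s assume s: "s \<in> I"
      have "cmp C (cmp C ?k ?h) (j s) = cmp C ?k (cmp C ?h (j s))"
        using assoc[OF coproduct_inj[OF assms(1) s] h(1) k(1)] by simp
      thus "cmp C (cmp C ?k ?h) (j s) = cmp C (idt C P) (j s)"
        using h k s id_left[OF coproduct_inj[OF assms(1) s]] by simp
    qed
  qed
  have 2: "cmp C ?h ?k = idt C P'"
  proof (rule coproduct_arr_eqI[OF assms(2)])
    show "cmp C ?h ?k \<in> hom C P' P'" using h k by auto
    show "idt C P' \<in> hom C P' P'" using coproduct_obj[OF assms(2)] by auto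
    show "\<forall>s\<in>I. cmp C (cmp C ?h ?k) (j' s) = cmp C (idt C P') (j' s)"
    proof
      fix s assume s: "s \<in> I"
      have "cmp C (cmp C ?h ?k) (j' s) = cmp C ?h (cmp C ?k (j' s))"
        using assoc[OF coproduct_inj[OF assms(2) s] k(1) h(1)] by simp
      thus "cmp C (cmp C ?h ?k) (j' s) = cmp C (idt C P') (j' s)"
        using h k s id_left[OF coproduct_inj[OF assms(2) s]] by simp
    qed
  qed
  show "iso C ?h" by (rule isoI[OF h(1) k(1) 1 2])
  show "?h \<in> hom C P P'" "\<forall>s\<in>I. cmp C ?h (j s) = j' s" using h by auto
qed

lemma coproduct_reindex: assumes "coproduct C (\<lambda>_. X) S P a" "bij_betw f S T"
  shows "coproduct C (\<lambda>_. X) T P (\<lambda>t. a (inv_into S f t))"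
proof (rule coproductI)
  have inv: "\<forall>t\<in>T. inv_into S f t \<in> S" using assms(2)
    by (metis bij_betw_def inv_into_into)
  show "P \<in> obj C" using coproduct_obj assms by auto
  show "\<forall>s\<in>T. X \<in> obj C \<and> a (inv_into S f s) \<in> hom C X P"
    using inv assms(1) unfolding coproduct_def by auto
next
  fix Y g assume Y: "Y \<in> obj C" "\<forall>s\<in>T. g s \<in> hom C X Y"
  have "\<forall>s\<in>S. g (f s) \<in> hom C X Y" using Y assms(2) bij_betwE by blast
  from cop_map_spec[OF assms(1) Y(1) this] assms(2)
  show "\<exists>h. h \<in> hom C P Y \<and> (\<forall>s\<in>T. cmp C h (a (inv_into S f s)) = g s)"
    by (metis bij_betw_imp_surj_on bij_betw_inv_into_right inv_into_into)
next
  fix Y h1 h2 assume h: "h1 \<in> hom C P Y" "h2 \<in> hom C P Y"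
      "\<forall>s\<in>T. cmp C h1 (a (inv_into S f s)) = cmp C h2 (a (inv_into S f s))"
  have "\<forall>s\<in>S. cmp C h1 (a s) = cmp C h2 (a s)"
  proof
    fix s assume "s \<in> S"
    then have "f s \<in> T" "inv_into S f (f s) = s" using assms(2) 
      by (auto simp: bij_betw_def)
    thus "cmp C h1 (a s) = cmp C h2 (a s)" using h(3) by metis
  qed
  thus "h1 = h2" using coproduct_arr_eqI[OF assms(1) h(1,2)] by auto
qed

lemma binary_coproduct_arr_eqI: assumes "binary_coproduct C A B P p q" "h1 \<in> hom C P Q" "h2 \<in> hom C P Q"
  "cmp C h1 p = cmp C h2 p" "cmp C h1 q = cmp C h2 q" shows "h1 = h2"
proof -
  have Q: "Q \<in> obj C" using assms hom_obj by auto
  have "cmp C h2 p \<in> hom C A Q" "cmp C h2 q \<in> hom C B Q" using assms unfolding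
      binary_coproduct_def by auto
  then have "\<exists>!h. h \<in> hom C P Q \<and> cmp C h p = cmp C h2 p \<and> cmp C h q = cmp C h2 q"
    using assms Q unfolding binary_coproduct_def by blast
  thus ?thesis using assms by blast
qed

lemma coproduct_union: assumes "coproduct C Xs S PS a" "coproduct C Xs R PR b" "S \<inter> R = {}"
  "binary_coproduct C PS PR P p q"
  shows "coproduct C Xs (S \<union> R) P (\<lambda>t. if t \<in> S then cmp C p (a t) else cmp C q (b t))"
proof -
  have pq: "P \<in> obj C" "p \<in> hom C PS P" "q \<in> hom C PR P" using assms(4) unfolding
      binary_coproduct_def by auto
  show ?thesis
  proof (rule coproductI)
    show "P \<in> obj C" using pq by auto
    show "\<forall>s\<in>S \<union> R. Xs s \<in> obj C
        \<and> (if s \<in> S then cmp C p (a s) else cmp C q (b s)) \<in> hom C (Xs s) P"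
      using assms(1,2) pq unfolding coproduct_def by auto
  next
    fix Y g assume Y: "Y \<in> obj C" "\<forall>s\<in>S \<union> R. g s \<in> hom C (Xs s) Y"
    note c1 = cop_map_spec[OF assms(1) Y(1), of g] and c2 = cop_map_spec[OF assms(2) Y(1), of g]
    have "\<exists>!h. h \<in> hom C P Y \<and> cmp C h p = cop_map C PS a S Y g
        \<and> cmp C h q = cop_map C PR b R Y g"
      using assms(4) Y c1 c2 unfolding binary_coproduct_def by auto
    then obtain h where h: "h \<in> hom C P Y" "cmp C h p = cop_map C PS a S Y g"
        "cmp C h q = cop_map C PR b R Y g" by blast
    have "\<forall>s\<in>S \<union> R. cmp C h (if s \<in> S then cmp C p (a s) else cmp C q (b s)) = g s"
    proof
      fix s assume s: "s \<in> S \<union> R"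
      show "cmp C h (if s \<in> S then cmp C p (a s) else cmp C q (b s)) = g s"
      proof (cases "s \<in> S")
        case True
        then show ?thesis using h c1 Y assoc[OF coproduct_inj[OF assms(1) True] pq(2) h(1)] by simp
      next
        case False
        then have "s \<in> R" using s by auto
        then show ?thesis using False h c2 Y assoc[OF coproduct_inj[OF assms(2)] pq(3) h(1)] by simp
      qed
    qed
    with h show "\<exists>h. h \<in> hom C P Y
        \<and> (\<forall>s\<in>S \<union> R. cmp C h (if s \<in> S then cmp C p (a s) else cmp C q (b s)) = g s)"
      by blast
  next
    fix Y h1 h2 assume h: "h1 \<in> hom C P Y" "h2 \<in> hom C P Y"
      "\<forall>s\<in>S \<union> R. cmp C h1 (if s \<in> S then cmp C p (a s) else cmp C q (b s))
          = cmp C h2 (if s \<in> S then cmp C p (a s) else cmp C q (b s))"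
    have "cmp C h1 p = cmp C h2 p"
      by (rule coproduct_comp_arr_eqI[OF assms(1) pq(2) h(1,2)]) (use h(3) in force)
    moreover have "cmp C h1 q = cmp C h2 q"
    proof (rule coproduct_comp_arr_eqI[OF assms(2) pq(3) h(1,2)])
      show "\<forall>s\<in>R. cmp C h1 (cmp C q (b s)) = cmp C h2 (cmp C q (b s))"
      proof
        fix s assume "s \<in> R"
        moreover have "s \<notin> S" using assms(3) \<open>s \<in> R\<close> by auto
        ultimately show "cmp C h1 (cmp C q (b s)) = cmp C h2 (cmp C q (b s))"
          using bspec[OF h(3), of s] by simp
      qed
    qed
    ultimately show "h1 = h2" using binary_coproduct_arr_eqI[OF assms(4) h(1,2)] by blast
  qed
qed

lemma pushout_initial_binary_coproduct: assumes "pushout C i f j k" "initial C (dom C i)"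
  shows "binary_coproduct C (cod C i) (cod C f) (cod C j) j k"
proof -
  have ar: "i \<in> arr C" "f \<in> arr C" "j \<in> arr C" "k \<in> arr C" and eq: "dom C i = dom C f"
      "dom C j = cod C i"
    "dom C k = cod C f" "cod C j = cod C k" using assms unfolding pushout_def by auto
  have P: "cod C j \<in> obj C" using cat ar unfolding category_def by auto
  show ?thesis unfolding binary_coproduct_def
  proof (intro conjI ballI)
    show "cod C j \<in> obj C" by fact
    show "j \<in> hom C (cod C i) (cod C j)" "k \<in> hom C (cod C f) (cod C j)" using ar eq by
        (auto simp: hom_def)
    fix Q u v assume Q: "Q \<in> obj C" "u \<in> hom C (cod C i) Q" "v \<in> hom C (cod C f) Q"
    have "cmp C u i \<in> hom C (dom C i) Q" "cmp C v f \<in> hom C (dom C i) Q"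
      using comp_hom[OF arr_hom[OF ar(1)] Q(2)] comp_hom[OF arr_hom[OF ar(2)] Q(3)] eq by auto
    then have "cmp C u i = cmp C v f" using assms(2) Q unfolding initial_def by blast
    moreover have "\<forall>Q\<in>obj C. \<forall>u\<in>hom C (cod C i) Q. \<forall>v\<in>hom C (cod C f) Q.
        cmp C u i = cmp C v f \<longrightarrow> (\<exists>!h. h \<in> hom C (cod C j) Q
        \<and> cmp C h j = u \<and> cmp C h k = v)"
      using assms(1) unfolding pushout_def by (elim conjE)
    ultimately show "\<exists>!h. h \<in> hom C (cod C j) Q \<and> cmp C h j = u \<and> cmp C h k = v"
      using Q by blast
  qed
qed

end

lemma functor_hom: "is_functor C D F \<Longrightarrow> f \<in> hom C X Y
    \<Longrightarrow> farr F f \<in> hom D (fobj F X) (fobj F Y)"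
  unfolding is_functor_def hom_def by auto

lemma functor_comp: "is_functor C D F \<Longrightarrow> f \<in> hom C X Y
    \<Longrightarrow> g \<in> hom C Y Z \<Longrightarrow> farr F (cmp C g f) = cmp D (farr F g) (farr F f)"
  unfolding is_functor_def hom_def by auto

lemma functor_id: "is_functor C D F \<Longrightarrow> X \<in> obj C
    \<Longrightarrow> farr F (idt C X) = idt D (fobj F X)"
  unfolding is_functor_def by auto

lemma functor_iso: assumes "is_functor C D F" "iso C f" "category C" shows "iso D (farr F f)"
proof -
  obtain g where g: "f \<in> arr C" "g \<in> hom C (cod C f) (dom C f)" "cmp C g f = idt C (dom C f)"
      "cmp C f g = idt C (cod C f)"
    using assms unfolding iso_def by auto
  have f: "f \<in> hom C (dom C f) (cod C f)" using g by (simp add: hom_def)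
  have o: "dom C f \<in> obj C" "cod C f \<in> obj C" using cat.hom_obj[OF _ f] assms(3)
      unfolding cat_def by auto
  show ?thesis unfolding iso_def
  proof (intro conjI bexI)
    show "farr F f \<in> arr D" using functor_hom[OF assms(1) f] by (simp add: hom_def)
    show "farr F g \<in> hom D (cod D (farr F f)) (dom D (farr F f))"
      using functor_hom[OF assms(1) f] functor_hom[OF assms(1) g(2)] by (simp add: hom_def)
    show "cmp D (farr F g) (farr F f) = idt D (dom D (farr F f))"
      using functor_comp[OF assms(1) f g(2)] g functor_id[OF assms(1)] o functor_hom[OF assms(1) f]
      by (simp add: hom_def)
    show "cmp D (farr F f) (farr F g) = idt D (cod D (farr F f))"
      using functor_comp[OF assms(1) g(2) f] g functor_id[OF assms(1)] o functor_hom[OF assms(1) f]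
      by (simp add: hom_def)
  qed
qed

context cat begin

lemma pushout_homs: assumes "pushout C i f j k"
  shows "i \<in> hom C (dom C i) (cod C i)" "f \<in> hom C (dom C i) (cod C f)"
    "j \<in> hom C (cod C i) (cod C j)" "k \<in> hom C (cod C f) (cod C j)" "cmp C j i = cmp C k f"
  using assms unfolding pushout_def hom_def by auto

lemma pushout_univ: assumes "pushout C i f j k" "Q \<in> obj C" "u \<in> hom C (cod C i) Q"
    "v \<in> hom C (cod C f) Q"
  "cmp C u i = cmp C v f"
  shows "\<exists>!h. h \<in> hom C (cod C j) Q \<and> cmp C h j = u \<and> cmp C h k = v"
proof -
  have "\<forall>Q\<in>obj C. \<forall>u\<in>hom C (cod C i) Q. \<forall>v\<in>hom C (cod C f) Q. cmp C u i
      = cmp C v f \<longrightarrow> (\<exists>!h. h \<in> hom C (cod C j) Q \<and> cmp C h j = u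
      \<and> cmp C h k = v)"
    using assms(1) unfolding pushout_def by (elim conjE)
  thus ?thesis using assms(2-5) by blast
qed

lemma pushout_arr_eqI: assumes "pushout C i f j k" "h1 \<in> hom C (cod C j) Q" "h2 \<in> hom C (cod C j) Q"
  "cmp C h1 j = cmp C h2 j" "cmp C h1 k = cmp C h2 k" shows "h1 = h2"
proof -
  note H = pushout_homs[OF assms(1)]
  have Q: "Q \<in> obj C" using hom_obj assms(2) by auto
  have "cmp C (cmp C h2 j) i = cmp C (cmp C h2 k) f"
    using assoc[OF H(1) H(3) assms(3)] assoc[OF H(2) H(4) assms(3)] H(5) by simp
  from pushout_univ[OF assms(1) Q comp_hom[OF H(3) assms(3)] comp_hom[OF H(4) assms(3)] this]
  show ?thesis using assms by blast
qed

lemma inverse_square: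
  assumes x: "x \<in> hom C A B" and y: "y \<in> hom C A' B'"
    and a: "a \<in> hom C A A'" "a' \<in> hom C A' A" "cmp C a a' = idt C A'"
    and b: "b \<in> hom C B B'" "b' \<in> hom C B' B" "cmp C b' b = idt C B"
    and sq: "cmp C b x = cmp C y a"
  shows "cmp C x a' = cmp C b' y"
proof -
  have "cmp C x a' = cmp C (cmp C b' b) (cmp C x a')"
    using b(3) id_left[OF comp_hom[OF a(2) x]] by simp
  also have "\<dots> = cmp C b' (cmp C (cmp C b x) a')"
    using assoc[OF comp_hom[OF a(2) x] b(1) b(2)] assoc[OF a(2) x b(1)] by simp
  also have "\<dots> = cmp C b' (cmp C y (cmp C a a'))"
    using sq assoc[OF a(2) a(1) y] by simp
  also have "\<dots> = cmp C b' y"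
    using a(3) id_right[OF y] by simp
  finally show ?thesis .
qed

lemma pushout_map_left_inverse:
  assumes po: "pushout C i f j k"
    and u: "u \<in> hom C (cod C j) Q" and v: "v \<in> hom C Q (cod C j)"
    and j': "j' \<in> hom C B Q" and k': "k' \<in> hom C E Q"
    and b: "b \<in> hom C (cod C i) B" "b' \<in> hom C B (cod C i)" "cmp C b' b = idt C (cod C i)"
    and c: "c \<in> hom C (cod C f) E" "c' \<in> hom C E (cod C f)" "cmp C c' c = idt C (cod C f)"
    and uj: "cmp C u j = cmp C j' b" and uk: "cmp C u k = cmp C k' c"
    and vj: "cmp C v j' = cmp C j b'" and vk: "cmp C v k' = cmp C k c'"
  shows "cmp C v u = idt C (cod C j)"
proof (rule pushout_arr_eqI[OF po])
  note H = pushout_homs[OF po]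
  show "cmp C v u \<in> hom C (cod C j) (cod C j)" using comp_hom[OF u v] .
  show "idt C (cod C j) \<in> hom C (cod C j) (cod C j)" using hom_obj[OF H(3)] by auto
  have "cmp C (cmp C v u) j = cmp C (cmp C v j') b"
    using assoc[OF H(3) u v] assoc[OF b(1) j' v] uj by simp
  also have "\<dots> = j"
    using vj assoc[OF b(1) b(2) H(3)] b(3) id_right[OF H(3)] by simp
  finally show "cmp C (cmp C v u) j = cmp C (idt C (cod C j)) j" using id_left[OF H(3)] by simp
  have "cmp C (cmp C v u) k = cmp C (cmp C v k') c"
    using assoc[OF H(4) u v] assoc[OF c(1) k' v] uk by simp
  also have "\<dots> = k"
    using vk assoc[OF c(1) c(2) H(4)] c(3) id_right[OF H(4)] by simp
  finally show "cmp C (cmp C v u) k = cmp C (idt C (cod C j)) k" using id_left[OF H(4)] by simp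
qed

text \<open>The inverse of \<open>u\<close> is induced, via the universal property, by the inverses of \<open>a\<close>,
  \<open>b\<close> and \<open>c\<close>.\<close>

lemma pushout_map_iso:
  assumes po: "pushout C i f j k" and po': "pushout C i' f' j' k'"
    and a: "a \<in> hom C (dom C i) (dom C i')" "iso C a"
    and b: "b \<in> hom C (cod C i) (cod C i')" "iso C b"
    and c: "c \<in> hom C (cod C f) (cod C f')" "iso C c"
    and bi: "cmp C b i = cmp C i' a" and cf: "cmp C c f = cmp C f' a"
    and u: "u \<in> hom C (cod C j) (cod C j')" "cmp C u j = cmp C j' b" "cmp C u k = cmp C k' c"
  shows "iso C u"
proof -
  note H = pushout_homs[OF po] and H' = pushout_homs[OF po']
  from isoE[OF a(2) a(1)] obtain a' where a': "a' \<in> hom C (dom C i') (dom C i)"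
    "cmp C a' a = idt C (dom C i)" "cmp C a a' = idt C (dom C i')" .
  from isoE[OF b(2) b(1)] obtain b' where b': "b' \<in> hom C (cod C i') (cod C i)"
    "cmp C b' b = idt C (cod C i)" "cmp C b b' = idt C (cod C i')" .
  from isoE[OF c(2) c(1)] obtain c' where c': "c' \<in> hom C (cod C f') (cod C f)"
    "cmp C c' c = idt C (cod C f)" "cmp C c c' = idt C (cod C f')" .
  have ia: "cmp C i a' = cmp C b' i'"
    using inverse_square[OF H(1) H'(1) a(1) a'(1,3) b(1) b'(1,2) bi] .
  have fa: "cmp C f a' = cmp C c' f'"
    using inverse_square[OF H(2) H'(2) a(1) a'(1,3) c(1) c'(1,2) cf] .
  have "cmp C (cmp C j b') i' = cmp C (cmp C j i) a'"
    using assoc[OF H'(1) b'(1) H(3)] assoc[OF a'(1) H(1) H(3)] ia by simp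
  also have "\<dots> = cmp C (cmp C k c') f'"
    using H(5) assoc[OF a'(1) H(2) H(4)] assoc[OF H'(2) c'(1) H(4)] fa by simp
  finally have "cmp C (cmp C j b') i' = cmp C (cmp C k c') f'" .
  from pushout_univ[OF po' hom_obj[OF H(3), THEN conjunct2] comp_hom[OF b'(1) H(3)] comp_hom[OF c'(1) H(4)] this]
  obtain v where v: "v \<in> hom C (cod C j') (cod C j)"
    "cmp C v j' = cmp C j b'" "cmp C v k' = cmp C k c'" by blast
  have "cmp C v u = idt C (cod C j)"
    by (rule pushout_map_left_inverse[OF po u(1) v(1) H'(3,4) b(1) b'(1,2) c(1) c'(1,2) u(2,3) v(2,3)])
  moreover have "cmp C u v = idt C (cod C j')"
    by (rule pushout_map_left_inverse[OF po' v(1) u(1) H(3,4) b'(1) b(1) b'(3) c'(1) c(1) c'(3) v(2,3) u(2,3)])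
  ultimately show ?thesis by (rule isoI[OF u(1) v(1)])
qed

end

lemma pre_cylinder_category_isos:
  assumes cc: "cofibration_category C" and weq: "weq C = {f. iso C f}"
  shows "pre_cylinder_category C"
proof -
  interpret cat C by unfold_locales (use cc in \<open>simp add: cofibration_category_def\<close>)
  have iso_arr: "f \<in> arr C" if "iso C f" for f
    using that unfolding iso_def by auto
  show ?thesis
    unfolding pre_cylinder_category_def weq Ball_def mem_Collect_eq
  proof (intro conjI allI impI)
    show "cofibration_category C" by (rule cc)
    show "{f. iso C f} \<subseteq> arr C" using iso_arr by auto
  next
    fix f g assume "iso C f" "iso C g" "cod C f = dom C g"
    moreover have "f \<in> hom C (dom C f) (cod C f)" "g \<in> hom C (cod C f) (cod C g)"
      using iso_arr calculation by (auto simp: hom_def)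
    ultimately show "iso C (cmp C g f)" by (intro iso_comp)
  next
    fix f g h assume arr: "f \<in> arr C" "g \<in> arr C" "h \<in> arr C" "cod C h = dom C g"
        "cod C g = dom C f"
      and isos: "iso C (cmp C f g)" "iso C (cmp C g h)"
    have "h \<in> hom C (dom C h) (cod C h)" "g \<in> hom C (cod C h) (cod C g)"
      "f \<in> hom C (cod C g) (cod C f)"
      using arr by (auto simp: hom_def)
    from iso_2_out_of_6[OF this isos]
    show "iso C f" "iso C g" "iso C h" "iso C (cmp C f (cmp C g h))" .
  next
    fix i f j k i' f' j' k' a b c u
    assume po: "pushout C i f j k" "pushout C i' f' j' k'"
      and abc: "a \<in> hom C (dom C i) (dom C i')" "b \<in> hom C (cod C i) (cod C i')"
      "c \<in> hom C (cod C f) (cod C f')" "iso C a" "iso C b" "iso C c"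
      and sq: "cmp C b i = cmp C i' a" "cmp C c f = cmp C f' a"
      and u: "u \<in> hom C (cod C j) (cod C j')" "cmp C u j = cmp C j' b" "cmp C u k = cmp C k' c"
    show "iso C u"
      by (rule pushout_map_iso[OF po abc(1,4) abc(2,5) abc(3,6) sq u])
  qed
qed


section \<open>The category \<open>F\<^sub>*\<close> of finite sets\<close>

lemma FinSet_obj[simp]: "obj FinSet = {S. finite S}" by (simp add: FinSet_def)
lemma FinSet_arr: "(S,T,f) \<in> arr FinSet
    \<longleftrightarrow> finite S \<and> finite T \<and> f \<in> S \<rightarrow>\<^sub>E T" by (simp add: FinSet_def)
lemma FinSet_dom[simp]: "dom FinSet (S,T,f) = S" by (simp add: FinSet_def)
lemma FinSet_cod[simp]: "cod FinSet (S,T,f) = T" by (simp add: FinSet_def)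
lemma FinSet_cmp[simp]: "cmp FinSet (T',U,g) (S,T,f) = (S,U,restrict (g \<circ> f) S)" by (simp add: FinSet_def)
lemma FinSet_idt[simp]: "idt FinSet S = (S,S,restrict id S)" by (simp add: FinSet_def)
lemma FinSet_cof: "(S,T,f) \<in> cof FinSet
    \<longleftrightarrow> finite S \<and> finite T \<and> f \<in> S \<rightarrow>\<^sub>E T
    \<and> inj_on f S" by (simp add: FinSet_def)
lemma FinSet_weq: "(S,T,f) \<in> weq FinSet
    \<longleftrightarrow> finite S \<and> finite T \<and> f \<in> S \<rightarrow>\<^sub>E T
    \<and> bij_betw f S T" by (simp add: FinSet_def)
lemma FinSet_hom: "(S',T',f) \<in> hom FinSet S T
    \<longleftrightarrow> S' = S \<and> T' = T \<and> finite S \<and> finite T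
    \<and> f \<in> S \<rightarrow>\<^sub>E T"
  by (auto simp: hom_def FinSet_arr)
lemma FinSet_arr_cases: "a \<in> arr FinSet
    \<Longrightarrow> \<exists>S T f. a = (S,T,f) \<and> finite S \<and> finite T
    \<and> f \<in> S \<rightarrow>\<^sub>E T"
  by (cases a) (auto simp: FinSet_arr)
lemma FinSet_cof_arr: "cof FinSet \<subseteq> arr FinSet" by (auto simp: FinSet_def)

lemma category_FinSet: "category FinSet"
  unfolding category_def
proof (intro conjI ballI impI)
  fix a assume "a \<in> arr FinSet"
  then obtain S T f where a: "a = (S,T,f)" "finite S" "finite T"
      "f \<in> S \<rightarrow>\<^sub>E T" using FinSet_arr_cases by blast
  show "dom FinSet a \<in> obj FinSet" "cod FinSet a \<in> obj FinSet" using a by auto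
  have "restrict (f \<circ> restrict id S) S = f" "restrict (restrict id T \<circ> f) S = f"
    using a(4) by (auto intro!: ext simp: PiE_arb[OF a(4)] PiE_iff)
  then show "cmp FinSet a (idt FinSet (dom FinSet a)) = a" "cmp FinSet (idt FinSet (cod FinSet a)) a = a"
    using a by simp_all
next
  fix X assume "X \<in> obj FinSet" thus "idt FinSet X \<in> hom FinSet X X" by (auto simp: FinSet_hom)
next
  fix a b assume "a \<in> arr FinSet" "b \<in> arr FinSet" "cod FinSet a = dom FinSet b"
  then show "cmp FinSet b a \<in> hom FinSet (dom FinSet a) (cod FinSet b)"
    by (auto simp: FinSet_hom FinSet_arr PiE_iff dest!: FinSet_arr_cases)
next
  fix a b c assume "a \<in> arr FinSet" "b \<in> arr FinSet" "c \<in> arr FinSet"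
      "cod FinSet a = dom FinSet b" "cod FinSet b = dom FinSet c"
  then show "cmp FinSet c (cmp FinSet b a) = cmp FinSet (cmp FinSet c b) a"
    by (auto dest!: FinSet_arr_cases intro!: ext simp: PiE_iff)
qed

interpretation FinSet: cat FinSet by unfold_locales (rule category_FinSet)

lemma FinSet_iso: "iso FinSet (S,T,f)
    \<longleftrightarrow> finite S \<and> finite T \<and> f \<in> S \<rightarrow>\<^sub>E T \<and> bij_betw f S T"
proof
  assume "iso FinSet (S,T,f)"
  then obtain g where g: "finite S" "finite T" "f \<in> S \<rightarrow>\<^sub>E T"
      "g \<in> T \<rightarrow>\<^sub>E S" "restrict (g \<circ> f) S = restrict id S"
    "restrict (f \<circ> g) T = restrict id T"
    unfolding iso_def by (auto simp: FinSet_arr FinSet_hom)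
  have 1: "\<And>x. x \<in> S \<Longrightarrow> g (f x) = x" using g(5) by (metis comp_apply id_apply restrict_apply')
  have 2: "\<And>y. y \<in> T \<Longrightarrow> f (g y) = y" using g(6) by (metis comp_apply id_apply restrict_apply')
  have "bij_betw f S T"
    by (rule bij_betwI[where g=g]) (use g 1 2 in auto)
  thus "finite S \<and> finite T \<and> f \<in> S \<rightarrow>\<^sub>E T \<and> bij_betw f S T" using g by auto
next
  assume a: "finite S \<and> finite T \<and> f \<in> S \<rightarrow>\<^sub>E T \<and> bij_betw f S T"
  let ?g = "restrict (inv_into S f) T"
  have g: "?g \<in> T \<rightarrow>\<^sub>E S" using a by (auto simp: bij_betw_def inv_into_into)
  show "iso FinSet (S,T,f)" unfolding iso_def
  proof (intro conjI bexI)
    show "(S,T,f) \<in> arr FinSet" using a by (simp add: FinSet_arr)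
    show "(T,S,?g) \<in> hom FinSet (cod FinSet (S,T,f)) (dom FinSet (S,T,f))" using a g by
        (simp add: FinSet_hom)
    show "cmp FinSet (T, S, ?g) (S, T, f) = idt FinSet (dom FinSet (S, T, f))"
      using a by (auto intro!: ext simp: bij_betw_def PiE_iff)
    show "cmp FinSet (S, T, f) (T, S, ?g) = idt FinSet (cod FinSet (S, T, f))"
      using a by (auto intro!: ext simp: bij_betw_def PiE_iff f_inv_into_f)
  qed
qed

lemma FinSet_weq_iso: "a \<in> weq FinSet \<longleftrightarrow> iso FinSet a"
  by (cases a) (simp add: FinSet_weq FinSet_iso)

lemma FinSet_iso_cof: "iso FinSet a \<Longrightarrow> a \<in> cof FinSet"
  by (cases a) (auto simp: FinSet_iso FinSet_cof bij_betw_def)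

lemma PiE_empty_fun: "f \<in> {} \<rightarrow>\<^sub>E X \<longleftrightarrow> f = (\<lambda>_. undefined)"
  by (auto simp: PiE_def extensional_def)

lemma FinSet_initial_empty: "initial FinSet {}"
  unfolding initial_def
proof (intro conjI ballI)
  show "{} \<in> obj FinSet" by simp
  fix X assume X: "X \<in> obj FinSet"
  show "\<exists>!f. f \<in> hom FinSet {} X"
  proof (rule ex1I[where a="({}, X, \<lambda>_. undefined)"])
    show "({}, X, \<lambda>_. undefined) \<in> hom FinSet {} X" using X by (simp add: FinSet_hom PiE_empty_fun)
    fix f assume "f \<in> hom FinSet {} X" thus "f = ({}, X, \<lambda>_. undefined)"
      by (cases f) (simp add: FinSet_hom PiE_empty_fun)
  qed
qed

lemma FinSet_initial_iff: "initial FinSet I \<longleftrightarrow> I = {}"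
proof
  assume "initial FinSet I"
  then have "\<exists>!f. f \<in> hom FinSet I {}" unfolding initial_def by simp
  then obtain f where "f \<in> hom FinSet I {}" by blast
  then show "I = {}" by (cases f) (auto simp: FinSet_hom PiE_iff)
qed (simp add: FinSet_initial_empty)

text \<open>The standard pushout of finite sets of naturals along an injection \<open>i : A \<rightarrow> B\<close>:
  the disjoint union of \<open>C\<close> and \<open>B - i ` A\<close>, tagged by parity.\<close>
definition fin_pushout :: "nat set \<Rightarrow> nat set \<Rightarrow> nat set \<Rightarrow> (nat
    \<Rightarrow> nat) \<Rightarrow> nat set" where
  "fin_pushout A B C i = (\<lambda>c. 2*c) ` C \<union> (\<lambda>b. 2*b+1) ` (B - i ` A)"
definition fin_pushout_inl :: "nat set \<Rightarrow> nat set \<Rightarrow> (nat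
    \<Rightarrow> nat) \<Rightarrow> (nat \<Rightarrow> nat) \<Rightarrow> nat \<Rightarrow> nat" where
  "fin_pushout_inl A B i f = restrict (\<lambda>b. if b \<in> i ` A then 2 * f (inv_into A i b) else 2*b+1) B"
definition fin_pushout_inr :: "nat set \<Rightarrow> nat \<Rightarrow> nat" where
  "fin_pushout_inr C = restrict (\<lambda>c. 2*c) C"

lemma FinSet_pushoutD:
  assumes "pushout FinSet (A,B,i) (A,C,f) (B,P,j) (C,P,k)"
  shows "finite A" "finite B" "finite C" "finite P"
    "i \<in> A \<rightarrow>\<^sub>E B" "f \<in> A \<rightarrow>\<^sub>E C"
        "j \<in> B \<rightarrow>\<^sub>E P" "k \<in> C \<rightarrow>\<^sub>E P"
  using assms unfolding pushout_def by (simp_all add: FinSet_arr)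

lemma fin_pushout_inl_image:
  "inj_on i A \<Longrightarrow> a \<in> A \<Longrightarrow> i a \<in> B
      \<Longrightarrow> fin_pushout_inl A B i f (i a) = 2 * f a"
  by (simp add: fin_pushout_inl_def)

lemma fin_pushout_inl_outside:
  "b \<in> B \<Longrightarrow> b \<notin> i ` A \<Longrightarrow> fin_pushout_inl A B i f b = 2 * b + 1"
  by (simp add: fin_pushout_inl_def)

lemma fin_pushout_legs:
  assumes "i \<in> A \<rightarrow>\<^sub>E B" "inj_on i A" "f \<in> A \<rightarrow>\<^sub>E C"
  shows "fin_pushout_inl A B i f \<in> B \<rightarrow>\<^sub>E fin_pushout A B C i"
    "fin_pushout_inr C \<in> C \<rightarrow>\<^sub>E fin_pushout A B C i"
    "restrict (fin_pushout_inl A B i f \<circ> i) A = restrict (fin_pushout_inr C \<circ> f) A"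
  using assms by (auto simp: fin_pushout_def fin_pushout_inl_def fin_pushout_inr_def PiE_iff inv_into_into intro!: ext)

lemma fin_pushout_copair:
  assumes "i \<in> A \<rightarrow>\<^sub>E B" "inj_on i A" "f \<in> A \<rightarrow>\<^sub>E C"
    and u: "u \<in> B \<rightarrow>\<^sub>E Q" and v: "v \<in> C \<rightarrow>\<^sub>E Q"
    and uv: "\<And>a. a \<in> A \<Longrightarrow> u (i a) = v (f a)"
  defines "h \<equiv> restrict (\<lambda>p. if even p then v (p div 2) else u (p div 2)) (fin_pushout A B C i)"
  shows "h \<in> fin_pushout A B C i \<rightarrow>\<^sub>E Q"
    "restrict (h \<circ> fin_pushout_inl A B i f) B = u"
    "restrict (h \<circ> fin_pushout_inr C) C = v"
proof -
  have inl: "fin_pushout_inl A B i f b \<in> fin_pushout A B C i" if "b \<in> B" for b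
    using fin_pushout_legs(1)[OF assms(1-3)] that by auto
  show "h \<in> fin_pushout A B C i \<rightarrow>\<^sub>E Q"
    unfolding h_def restrict_PiE_iff fin_pushout_def using PiE_mem[OF u] PiE_mem[OF v] by auto
  show "restrict (h \<circ> fin_pushout_inl A B i f) B = u"
  proof (rule ext)
    fix b show "restrict (h \<circ> fin_pushout_inl A B i f) B b = u b"
    proof (cases "b \<in> B")
      case True
      show ?thesis
      proof (cases "b \<in> i ` A")
        case True
        then obtain a where a: "a \<in> A" "b = i a" by auto
        then have e: "fin_pushout_inl A B i f b = 2 * f a"
          using fin_pushout_inl_image[OF assms(2)] \<open>b \<in> B\<close> by simp
        then show ?thesis using inl[OF \<open>b \<in> B\<close>] uv a \<open>b \<in> B\<close>
            by (simp add: h_def)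
      next
        case False
        then have "fin_pushout_inl A B i f b = 2 * b + 1"
          using fin_pushout_inl_outside \<open>b \<in> B\<close> by simp
        then show ?thesis using inl[OF \<open>b \<in> B\<close>] \<open>b \<in> B\<close> by (simp add: h_def)
      qed
    qed (simp add: PiE_arb[OF u])
  qed
  show "restrict (h \<circ> fin_pushout_inr C) C = v"
  proof (rule ext)
    fix c show "restrict (h \<circ> fin_pushout_inr C) C c = v c"
    proof (cases "c \<in> C")
      case True
      then have "2 * c \<in> fin_pushout A B C i" by (simp add: fin_pushout_def)
      then show ?thesis using True by (simp add: h_def fin_pushout_inr_def)
    qed (simp add: PiE_arb[OF v])
  qed
qed

lemma fin_pushout_arr_eqI:
  assumes "h \<in> fin_pushout A B C i \<rightarrow>\<^sub>E Q" "h' \<in> fin_pushout A B C i \<rightarrow>\<^sub>E Q"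
    and "restrict (h \<circ> fin_pushout_inl A B i f) B = restrict (h' \<circ> fin_pushout_inl A B i f) B"
    and "restrict (h \<circ> fin_pushout_inr C) C = restrict (h' \<circ> fin_pushout_inr C) C"
  shows "h = h'"
proof (rule extensionalityI[where A="fin_pushout A B C i"])
  show "h \<in> extensional (fin_pushout A B C i)" "h' \<in> extensional (fin_pushout A B C i)"
    using assms(1,2) by (simp_all add: PiE_iff)
  fix p assume "p \<in> fin_pushout A B C i"
  then consider c where "c \<in> C" "p = 2 * c" | b where "b \<in> B" "b \<notin> i ` A" "p = 2 * b + 1"
    unfolding fin_pushout_def by auto
  then show "h p = h' p"
  proof cases
    case 1
    then show ?thesis using fun_cong[OF assms(4), of c] by (simp add: fin_pushout_inr_def)
  next
    case 2
    then show ?thesis using fun_cong[OF assms(3), of b] by (simp add: fin_pushout_inl_def)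
  qed
qed

lemma fin_pushout_is_pushout:
  assumes fin: "finite A" "finite B" "finite C" and i: "i \<in> A \<rightarrow>\<^sub>E B" "inj_on i A"
    and f: "f \<in> A \<rightarrow>\<^sub>E C"
  shows "pushout FinSet (A,B,i) (A,C,f) (B, fin_pushout A B C i, fin_pushout_inl A B i f) (C, fin_pushout A B C i, fin_pushout_inr C)"
  unfolding pushout_def
proof (intro conjI ballI impI)
  let ?P = "fin_pushout A B C i" and ?j = "fin_pushout_inl A B i f" and ?k = "fin_pushout_inr C"
  have finP: "finite ?P" using fin by (simp add: fin_pushout_def)
  note legs = fin_pushout_legs[OF i f]
  show "(A, B, i) \<in> arr FinSet" "(A, C, f) \<in> arr FinSet" "(B, ?P, ?j) \<in> arr FinSet"
    "(C, ?P, ?k) \<in> arr FinSet"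
    using fin i f finP legs by (auto simp: FinSet_arr)
  show "cmp FinSet (B, ?P, ?j) (A, B, i) = cmp FinSet (C, ?P, ?k) (A, C, f)" using legs(3) by simp
  fix Q u v assume Q: "Q \<in> obj FinSet" and u: "u \<in> hom FinSet (cod FinSet (A, B, i)) Q"
    and v: "v \<in> hom FinSet (cod FinSet (A, C, f)) Q"
    and uv: "cmp FinSet u (A, B, i) = cmp FinSet v (A, C, f)"
  obtain u' where u': "u = (B,Q,u')" "u' \<in> B \<rightarrow>\<^sub>E Q" using u by (cases u)
      (auto simp: FinSet_hom)
  obtain v' where v': "v = (C,Q,v')" "v' \<in> C \<rightarrow>\<^sub>E Q" using v by (cases v)
      (auto simp: FinSet_hom)
  have "u' (i a) = v' (f a)" if "a \<in> A" for a
    using fun_cong[of _ _ a, OF uv[unfolded u' v' FinSet_cmp, simplified]] that by simp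
  note h = fin_pushout_copair[OF i f u'(2) v'(2) this]
  show "\<exists>!h. h \<in> hom FinSet (cod FinSet (B, ?P, ?j)) Q \<and> cmp FinSet h (B, ?P, ?j) = u
      \<and> cmp FinSet h (C, ?P, ?k) = v"
  proof (rule ex1I, intro conjI)
    fix h' assume H: "h' \<in> hom FinSet (cod FinSet (B, ?P, ?j)) Q
        \<and> cmp FinSet h' (B, ?P, ?j) = u \<and> cmp FinSet h' (C, ?P, ?k) = v"
    obtain h'' where h'': "h' = (?P, Q, h'')" "h'' \<in> ?P \<rightarrow>\<^sub>E Q"
      using H by (cases h') (auto simp: FinSet_hom)
    have "restrict (h'' \<circ> ?j) B = u'" "restrict (h'' \<circ> ?k) C = v'"
      using H h'' u' v' by auto
    then have "h'' = restrict (\<lambda>p. if even p then v' (p div 2) else u' (p div 2)) ?P"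
      by (intro fin_pushout_arr_eqI[OF h''(2) h(1), where f=f]) (simp_all add: h(2,3))
    then show "h' = (?P, Q, restrict (\<lambda>p. if even p then v' (p div 2) else u' (p div 2)) ?P)"
      using h'' by simp
  qed (use h u' v' Q finP in \<open>simp_all add: FinSet_hom\<close>)
qed simp_all

lemma FinSet_pushout_to_fin_pushout:
  assumes po: "pushout FinSet (A,B,i) (A,C,f) (B,P,j) (C,P,k)" and inj: "inj_on i A"
  obtains h where "\<And>b. b \<in> B \<Longrightarrow> h (j b) = fin_pushout_inl A B i f b"
    "\<And>c. c \<in> C \<Longrightarrow> h (k c) = 2 * c"
proof -
  have ar: "finite A" "finite B" "finite C" "i \<in> A \<rightarrow>\<^sub>E B" "f \<in> A \<rightarrow>\<^sub>E C"
    using po unfolding pushout_def by (auto simp: FinSet_arr)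
  let ?E = "fin_pushout A B C i"
  note E = fin_pushout_is_pushout[OF ar(1-4) inj ar(5)]
  note EH = FinSet.pushout_homs[OF E]
  have Eobj: "?E \<in> obj FinSet" using FinSet.hom_obj[OF EH(3)] by simp
  have "\<exists>!h. h \<in> hom FinSet P ?E
      \<and> cmp FinSet h (B,P,j) = (B, ?E, fin_pushout_inl A B i f)
      \<and> cmp FinSet h (C,P,k) = (C, ?E, fin_pushout_inr C)"
    using FinSet.pushout_univ[OF po Eobj, of "(B, ?E, fin_pushout_inl A B i f)" "(C, ?E, fin_pushout_inr C)"] EH
    by simp
  then obtain h where h: "h \<in> hom FinSet P ?E" "cmp FinSet h (B,P,j) = (B, ?E, fin_pushout_inl A B i f)"
    "cmp FinSet h (C,P,k) = (C, ?E, fin_pushout_inr C)"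
    by blast
  obtain h' where h': "h = (P, ?E, h')" using h(1) by (cases h) (auto simp: FinSet_hom)
  show ?thesis
  proof
    have hj: "restrict (h' \<circ> j) B = fin_pushout_inl A B i f"
      and hk: "restrict (h' \<circ> k) C = fin_pushout_inr C"
      using h(2,3) h' by simp_all
    show "h' (j b) = fin_pushout_inl A B i f b" if "b \<in> B" for b
      using fun_cong[OF hj, of b] that by simp
    show "h' (k c) = 2 * c" if "c \<in> C" for c
      using fun_cong[OF hk, of c] that by (simp add: fin_pushout_inr_def)
  qed
qed

lemma FinSet_pushout_inj:
  assumes "pushout FinSet (A,B,i) (A,C,f) (B,P,j) (C,P,k)" "inj_on i A"
  shows "inj_on k C"
proof -
  obtain h where "\<And>c. c \<in> C \<Longrightarrow> h (k c) = 2 * c"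
    using FinSet_pushout_to_fin_pushout[OF assms] by blast
  then show ?thesis by (metis inj_onI mult_left_cancel zero_neq_numeral)
qed

text \<open>The glued family is read off, by parity, through the comparison map to \<open>fin_pushout\<close>.\<close>

lemma FinSet_pushout_glue:
  assumes po: "pushout FinSet (A,B,i) (A,C,f) (B,P,j) (C,P,k)" and inj: "inj_on i A"
    and xy: "\<And>a. a \<in> A \<Longrightarrow> x (i a) = y (f a)"
  obtains g where "\<And>b. b \<in> B \<Longrightarrow> g (j b) = x b" "\<And>c. c \<in> C
      \<Longrightarrow> g (k c) = y c"
proof -
  have i: "i \<in> A \<rightarrow>\<^sub>E B" using po unfolding pushout_def by (auto simp: FinSet_arr)
  obtain h where hj: "\<And>b. b \<in> B \<Longrightarrow> h (j b) = fin_pushout_inl A B i f b"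
    and hk: "\<And>c. c \<in> C \<Longrightarrow> h (k c) = 2 * c"
    using FinSet_pushout_to_fin_pushout[OF po inj] by blast
  show ?thesis
  proof
    show "(\<lambda>p. if even (h p) then y (h p div 2) else x (h p div 2)) (k c) = y c" if "c \<in> C" for c
      using hk[OF that] by simp
    show "(\<lambda>p. if even (h p) then y (h p div 2) else x (h p div 2)) (j b) = x b" if b:
        "b \<in> B" for b
    proof (cases "b \<in> i ` A")
      case True
      then obtain a where "a \<in> A" "b = i a" by auto
      then show ?thesis using hj[OF b] fin_pushout_inl_image[OF inj] b xy by simp
    next
      case False
      then show ?thesis using hj[OF b] fin_pushout_inl_outside[OF b] by simp
    qed
  qed
qed

text \<open>The legs of a pushout are jointly surjective: both maps to \<open>{0, 1}\<close> that are
  constantly \<open>0\<close> on their images agree with the constant map.\<close>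
lemma FinSet_pushout_cover:
  assumes po: "pushout FinSet (A,B,i) (A,C,f) (B,P,j) (C,P,k)"
  shows "P = j ` B \<union> k ` C"
proof -
  have ar: "finite P" "j \<in> B \<rightarrow>\<^sub>E P" "k \<in> C \<rightarrow>\<^sub>E P"
    using po unfolding pushout_def by (auto simp: FinSet_arr)
  let ?Q = "{0::nat, 1}" and ?\<chi> = "\<lambda>p. if p \<in> j ` B \<union> k ` C then 0::nat else 1"
  have "(P, ?Q, restrict (\<lambda>_. 0) P) = (P, ?Q, restrict ?\<chi> P)"
  proof (rule FinSet.pushout_arr_eqI[OF po])
    show "(P, ?Q, restrict (\<lambda>_. 0) P) \<in> hom FinSet (cod FinSet (B, P, j)) ?Q"
      "(P, ?Q, restrict ?\<chi> P) \<in> hom FinSet (cod FinSet (B, P, j)) ?Q"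
      using ar by (auto simp: FinSet_hom)
    show "cmp FinSet (P, ?Q, restrict (\<lambda>_. 0) P) (B, P, j) = cmp FinSet (P, ?Q, restrict ?\<chi> P) (B, P, j)"
      "cmp FinSet (P, ?Q, restrict (\<lambda>_. 0) P) (C, P, k) = cmp FinSet (P, ?Q, restrict ?\<chi> P) (C, P, k)"
      using ar by (auto intro!: ext simp: PiE_iff)
  qed
  then have eq: "restrict (\<lambda>_. 0) P = restrict ?\<chi> P" by simp
  have "p \<in> j ` B \<union> k ` C" if "p \<in> P" for p
    using fun_cong[OF eq, of p] that by (simp split: if_splits)
  moreover have "j ` B \<union> k ` C \<subseteq> P" using ar by auto
  ultimately show ?thesis by blast
qed

lemma inj_restrict_iff: "inj_on (restrict g S) S \<longleftrightarrow> inj_on g S"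
  by (rule inj_on_cong) simp

lemma restrict_comp_PiE: "f \<in> S \<rightarrow>\<^sub>E T
    \<Longrightarrow> g \<in> T \<rightarrow>\<^sub>E U
    \<Longrightarrow> restrict (g \<circ> f) S \<in> S \<rightarrow>\<^sub>E U"
  by (auto simp: PiE_iff)

lemma FinSet_pushout_tuples: assumes "pushout FinSet i f j k"
  shows "\<exists>A B C P i' f' j' k'. i = (A,B,i') \<and> f = (A,C,f') \<and> j = (B,P,j') \<and> k = (C,P,k')"
proof -
  obtain A B i' where i: "i = (A,B,i')" by (cases i)
  obtain A2 C f' where f: "f = (A2,C,f')" by (cases f)
  obtain B2 P j' where j: "j = (B2,P,j')" by (cases j)
  obtain C2 P2 k' where k: "k = (C2,P2,k')" by (cases k)
  show ?thesis using assms unfolding pushout_def i f j k by auto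
qed

lemma cofibration_category_FinSet: "cofibration_category FinSet"
  unfolding cofibration_category_def
proof (intro conjI ballI allI impI)
  show "category FinSet" by (rule category_FinSet)
  show "cof FinSet \<subseteq> arr FinSet" by (rule FinSet_cof_arr)
next
  fix f assume "iso FinSet f" thus "f \<in> cof FinSet" by (rule FinSet_iso_cof)
next
  fix f g assume fg: "f \<in> cof FinSet" "g \<in> cof FinSet" "cod FinSet f = dom FinSet g"
  obtain S T f' where f: "f = (S,T,f')" by (cases f)
  obtain T2 U g' where g: "g = (T2,U,g')" by (cases g)
  have "T2 = T" using fg f g by simp
  then have a: "finite S" "finite T" "finite U" "f' \<in> S \<rightarrow>\<^sub>E T"
      "g' \<in> T \<rightarrow>\<^sub>E U" "inj_on f' S" "inj_on g' T"
    using fg f g by (auto simp: FinSet_cof)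
  have "f' ` S \<subseteq> T" using a(4) by auto
  then have "inj_on (g' \<circ> f') S" using comp_inj_on[OF a(6) inj_on_subset[OF a(7)]] by simp
  then show "cmp FinSet g f \<in> cof FinSet" using a f g \<open>T2 = T\<close> restrict_comp_PiE[OF a(4,5)]
    by (simp add: FinSet_cof inj_restrict_iff)
next
  show "\<exists>I. initial FinSet I
      \<and> (\<forall>X\<in>obj FinSet. \<forall>f\<in>hom FinSet I X. f \<in> cof FinSet)"
  proof (intro exI conjI ballI)
    show "initial FinSet {}" by (rule FinSet_initial_empty)
    fix X f assume "X \<in> obj FinSet" "f \<in> hom FinSet {} X"
    thus "f \<in> cof FinSet" by (cases f) (auto simp: FinSet_hom FinSet_cof)
  qed
next
  fix i f assume i: "i \<in> cof FinSet" and f: "f \<in> arr FinSet" "dom FinSet f = dom FinSet i"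
  obtain A B i' where ii: "i = (A,B,i')" by (cases i)
  obtain A2 C f' where ff: "f = (A2,C,f')" by (cases f)
  have "A2 = A" using f ii ff by simp
  then have "pushout FinSet i f (B, fin_pushout A B C i', fin_pushout_inl A B i' f') (C, fin_pushout A B C i', fin_pushout_inr C)"
    using fin_pushout_is_pushout[of A B C i' f'] i f ii ff by (auto simp: FinSet_cof FinSet_arr)
  thus "\<exists>j k. pushout FinSet i f j k" by blast
next
  fix i f j k assume po: "pushout FinSet i f j k" and i: "i \<in> cof FinSet"
  from FinSet_pushout_tuples[OF po] obtain A B C P i' f' j' k' where sh: "i = (A,B,i')" "f = (A,C,f')"
      "j = (B,P,j')" "k = (C,P,k')"
    by blast
  have "inj_on k' C" using FinSet_pushout_inj[of A B i' C f' P j' k'] po i sh by (simp add: FinSet_cof)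
  moreover have "k \<in> arr FinSet" using po unfolding pushout_def by simp
  ultimately show "k \<in> cof FinSet" using sh by (simp add: FinSet_cof FinSet_arr)
qed

lemma pre_cylinder_category_FinSet: "pre_cylinder_category FinSet"
  by (rule pre_cylinder_category_isos[OF cofibration_category_FinSet]) (auto simp: FinSet_weq_iso)

lemma finite_star[simp]: "finite star" by (simp add: star_def)

lemma star_obj[simp]: "star \<in> obj FinSet" by (simp add: star_def)

definition point :: "nat set \<Rightarrow> nat \<Rightarrow> finarr" where "point S s
    = (star, S, restrict (\<lambda>_. s) star)"

lemma point_hom: "finite S \<Longrightarrow> s \<in> S \<Longrightarrow> point S s \<in> hom FinSet star S"
  by (simp add: point_def FinSet_hom star_def)

lemma point_iso: "iso FinSet (point {s} s)"
  by (simp add: point_def FinSet_iso star_def bij_betw_def)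

lemma point_comp: "(S,T,f) \<in> arr FinSet \<Longrightarrow> s \<in> S
    \<Longrightarrow> cmp FinSet (S,T,f) (point S s) = point T (f s)"
  by (auto simp: point_def star_def intro!: ext)

lemma FinSet_pushout_disjoint_union:
  assumes fin: "finite S" "finite T" and disj: "S \<inter> T = {}"
  shows "pushout FinSet ({}, S, \<lambda>_. undefined) ({}, T, \<lambda>_. undefined) (S, S \<union> T,
      restrict id S) (T, S \<union> T, restrict id T)"
  unfolding pushout_def
proof (intro conjI ballI impI)
  show "({}, S, \<lambda>_. undefined) \<in> arr FinSet" "({}, T, \<lambda>_. undefined) \<in> arr FinSet"
    "(S, S \<union> T, restrict id S) \<in> arr FinSet" "(T, S \<union> T, restrict id T) \<in> arr FinSet"
    using fin by (auto simp: FinSet_arr PiE_empty_fun)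
  show "cmp FinSet (S, S \<union> T, restrict id S) ({}, S, \<lambda>_. undefined)
      = cmp FinSet (T, S \<union> T, restrict id T) ({}, T, \<lambda>_. undefined)" by (simp add: restrict_def)
  fix Q u v assume Q: "Q \<in> obj FinSet" and u: "u \<in> hom FinSet (cod FinSet ({}, S, \<lambda>_. undefined)) Q"
    and v: "v \<in> hom FinSet (cod FinSet ({}, T, \<lambda>_. undefined)) Q"
  obtain u' where u': "u = (S,Q,u')" "u' \<in> S \<rightarrow>\<^sub>E Q" using u by (cases u)
      (auto simp: FinSet_hom)
  obtain v' where v': "v = (T,Q,v')" "v' \<in> T \<rightarrow>\<^sub>E Q" using v by (cases v)
      (auto simp: FinSet_hom)
  let ?h = "restrict (\<lambda>x. if x \<in> S then u' x else v' x) (S \<union> T)"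
  have legs: "restrict (h \<circ> restrict id S) S = u'
      \<and> restrict (h \<circ> restrict id T) T = v'
      \<longleftrightarrow> (\<forall>x\<in>S \<union> T. h x = ?h x)" for h
    using disj by (auto simp: fun_eq_iff PiE_arb[OF u'(2)] PiE_arb[OF v'(2)])
  have h: "?h \<in> S \<union> T \<rightarrow>\<^sub>E Q" using u'(2) v'(2) by auto
  show "\<exists>!h. h \<in> hom FinSet (cod FinSet (S, S \<union> T, restrict id S)) Q
      \<and> cmp FinSet h (S, S \<union> T, restrict id S) = u
      \<and> cmp FinSet h (T, S \<union> T, restrict id T) = v"
  proof (rule ex1I[where a="(S \<union> T, Q, ?h)"])
    show "(S \<union> T, Q, ?h) \<in> hom FinSet (cod FinSet (S, S \<union> T, restrict id S)) Q
        \<and> cmp FinSet (S \<union> T, Q, ?h) (S, S \<union> T, restrict id S) = u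
        \<and> cmp FinSet (S \<union> T, Q, ?h) (T, S \<union> T, restrict id T) = v"
      using legs[of ?h] h fin Q u' v' by (simp add: FinSet_hom)
    fix g assume g: "g \<in> hom FinSet (cod FinSet (S, S \<union> T, restrict id S)) Q
        \<and> cmp FinSet g (S, S \<union> T, restrict id S) = u
        \<and> cmp FinSet g (T, S \<union> T, restrict id T) = v"
    obtain g' where g': "g = (S \<union> T, Q, g')" "g' \<in> S \<union> T \<rightarrow>\<^sub>E Q"
      using g by (cases g) (auto simp: FinSet_hom)
    have "\<forall>x\<in>S \<union> T. g' x = ?h x" using g g' u' v' legs[of g'] by simp
    then have "g' = ?h"
      using g'(2) h by (intro extensionalityI[where A="S \<union> T"]) (auto simp: PiE_iff)
    then show "g = (S \<union> T, Q, ?h)" using g' by simp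
  qed
qed simp_all


section \<open>Copowers in a pre-cylinder category\<close>

locale pre_cylinder =
  fixes D :: "('o,'a) pccat"
  assumes pc: "pre_cylinder_category D"
begin

lemma cofibration: "cofibration_category D" using pc unfolding pre_cylinder_category_def by auto

sublocale cat D by unfold_locales (use cofibration in \<open>simp add: cofibration_category_def\<close>)

lemma iso_weq: "iso D f \<Longrightarrow> f \<in> weq D" using pc unfolding pre_cylinder_category_def by auto
lemma iso_cof: "iso D f \<Longrightarrow> f \<in> cof D" using cofibration unfolding
    cofibration_category_def by auto
lemma cof_comp: "f \<in> cof D \<Longrightarrow> g \<in> cof D
    \<Longrightarrow> cod D f = dom D g \<Longrightarrow> cmp D g f \<in> cof D"
  using cofibration unfolding cofibration_category_def by auto
lemma pushout_exists: "i \<in> cof D \<Longrightarrow> f \<in> arr D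
    \<Longrightarrow> dom D f = dom D i \<Longrightarrow> \<exists>j k. pushout D i f j k"
  using cofibration unfolding cofibration_category_def by auto
lemma pushout_cof: "pushout D i f j k \<Longrightarrow> i \<in> cof D \<Longrightarrow> k \<in> cof D"
  using cofibration unfolding cofibration_category_def by auto

definition init where "init = (SOME I. initial D I
    \<and> (\<forall>X\<in>obj D. \<forall>f\<in>hom D I X. f \<in> cof D))"

lemma init: "initial D init" "\<And>X f. X \<in> obj D \<Longrightarrow> f \<in> hom D init X
    \<Longrightarrow> f \<in> cof D"
proof -
  have "\<exists>I. initial D I \<and> (\<forall>X\<in>obj D. \<forall>f\<in>hom D I X. f \<in> cof D)"
    using cofibration unfolding cofibration_category_def by (elim conjE) assumption
  from someI_ex[OF this] have "initial D init
      \<and> (\<forall>X\<in>obj D. \<forall>f\<in>hom D init X. f \<in> cof D)"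
    unfolding init_def .
  thus "initial D init" "\<And>X f. X \<in> obj D \<Longrightarrow> f \<in> hom D init X
      \<Longrightarrow> f \<in> cof D" by blast+
qed

lemma init_arr: "X \<in> obj D \<Longrightarrow> \<exists>f. f \<in> hom D init X"
  using init(1) unfolding initial_def by auto

lemma binary_coproduct_exists: assumes "A \<in> obj D" "B \<in> obj D"
  shows "\<exists>P p q. binary_coproduct D A B P p q \<and> q \<in> cof D"
proof -
  obtain i where i: "i \<in> hom D init A" using init_arr assms by blast
  obtain f where f: "f \<in> hom D init B" using init_arr assms by blast
  have ic: "i \<in> cof D" using init(2) assms i by auto
  have "\<exists>j k. pushout D i f j k" using pushout_exists[OF ic] i f by (auto simp: hom_def)
  then obtain j k where po: "pushout D i f j k" by blast
  have "binary_coproduct D (cod D i) (cod D f) (cod D j) j k"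
    by (rule pushout_initial_binary_coproduct[OF po]) (use i init(1) in \<open>simp add: hom_def\<close>)
  moreover have "k \<in> cof D" using pushout_cof[OF po ic] .
  ultimately show ?thesis using i f by (auto simp: hom_def)
qed

lemma copower_exists: assumes "finite S" "X \<in> obj D" shows "\<exists>P j. coproduct D (\<lambda>_. X) S P j"
  using assms(1)
proof (induction S rule: finite_induct)
  case empty
  show ?case using coproduct_empty[OF init(1)] by blast
next
  case (insert s S)
  then obtain P j where Pj: "coproduct D (\<lambda>_. X) S P j" by blast
  obtain Q p q where b: "binary_coproduct D P X Q p q"
      using binary_coproduct_exists[OF coproduct_obj[OF Pj] assms(2)] by blast
  have "coproduct D (\<lambda>_. X) (S \<union> {s}) Q (\<lambda>t. if t \<in> S then cmp D p (j t) else cmp D q (idt D X))"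
    by (rule coproduct_union[OF Pj coproduct_singleton[OF assms(2)] _ b]) (use insert in auto)
  thus ?case by auto
qed

end

text \<open>The copower at the singleton \<open>star\<close> is \<open>X\<close> itself, so that evaluating the copower
  functor at \<open>star\<close> gives back \<open>X\<close> on the nose.\<close>
definition copower_choice :: "('o,'a,'z) cat_scheme \<Rightarrow> 'o \<Rightarrow> nat set
    \<Rightarrow> 'o \<times> (nat \<Rightarrow> 'a)" where
  "copower_choice D X S = (if S = star then (X, \<lambda>_. idt D X) else SOME (P,j). coproduct D (\<lambda>_. X) S P j)"
definition "copower D X S = fst (copower_choice D X S)"
definition "copower_inj D X S = snd (copower_choice D X S)"

lemma copower_star: "copower D X star = X" "copower_inj D X star = (\<lambda>_. idt D X)"
  by (simp_all add: copower_def copower_inj_def copower_choice_def)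

context pre_cylinder begin

lemma coproduct_copower: assumes "X \<in> obj D"
    "finite S" shows "coproduct D (\<lambda>_. X) S (copower D X S) (copower_inj D X S)"
proof (cases "S = star")
  case True
  then show ?thesis using coproduct_singleton[OF assms(1), of 0]
      by (simp add: copower_def copower_inj_def copower_choice_def star_def)
next
  case False
  have "\<exists>Pj. (\<lambda>(P,j). coproduct D (\<lambda>_. X) S P j) Pj" using
      copower_exists[OF assms(2,1)] by auto
  from someI_ex[OF this] show ?thesis using False
    by (simp add: copower_def copower_inj_def copower_choice_def split: prod.splits)
qed

lemma copower_obj: "X \<in> obj D \<Longrightarrow> finite S
    \<Longrightarrow> copower D X S \<in> obj D" using coproduct_obj[OF coproduct_copower] .
lemma copower_inj_hom: "X \<in> obj D \<Longrightarrow> finite S \<Longrightarrow> s \<in> S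
    \<Longrightarrow> copower_inj D X S s \<in> hom D X (copower D X S)"
  using coproduct_inj[OF coproduct_copower] .

end

definition copower_fobj :: "('o,'a,'z) cat_scheme \<Rightarrow> 'o \<Rightarrow> nat set \<Rightarrow> 'o" where
  "copower_fobj D X = (\<lambda>S. if S \<in> obj FinSet then copower D X S else undefined)"
definition copower_farr :: "('o,'a,'z) cat_scheme \<Rightarrow> 'o \<Rightarrow> finarr \<Rightarrow> 'a" where
  "copower_farr D X = (\<lambda>a. if a \<in> arr FinSet
     then cop_map D (copower D X (dom FinSet a)) (copower_inj D X (dom FinSet a)) (dom FinSet a)
       (copower D X (cod FinSet a)) (\<lambda>s. copower_inj D X (cod FinSet a) (snd (snd a) s))
     else undefined)"
definition "copower_functor D X = (copower_fobj D X, copower_farr D X)"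

context pre_cylinder begin

lemma copower_farr_tuple: "(S,T,f) \<in> arr FinSet
    \<Longrightarrow> copower_farr D X (S,T,f)
    = cop_map D (copower D X S) (copower_inj D X S) S (copower D X T) (\<lambda>s. copower_inj D X T (f s))"
  by (simp add: copower_farr_def)

lemma copower_farr_spec: assumes X: "X \<in> obj D" and a: "(S,T,f) \<in> arr FinSet"
  shows "copower_farr D X (S,T,f) \<in> hom D (copower D X S) (copower D X T)"
    "\<And>s. s \<in> S \<Longrightarrow> cmp D (copower_farr D X (S,T,f)) (copower_inj D X S s)
        = copower_inj D X T (f s)"
proof -
  have fin: "finite S" "finite T" "f \<in> S \<rightarrow>\<^sub>E T" using a by (auto simp: FinSet_arr)
  have g: "\<forall>s\<in>S. copower_inj D X T (f s) \<in> hom D X (copower D X T)" using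
      copower_inj_hom[OF X fin(2)] fin(3) by auto
  note c = cop_map_spec[OF coproduct_copower[OF X fin(1)] copower_obj[OF X fin(2)] g]
  show "copower_farr D X (S,T,f) \<in> hom D (copower D X S) (copower D X T)" using c
      copower_farr_tuple[OF a] by simp
  show "\<And>s. s \<in> S \<Longrightarrow> cmp D (copower_farr D X (S,T,f)) (copower_inj D X S s)
      = copower_inj D X T (f s)" using c copower_farr_tuple[OF a] by simp
qed

lemma copower_farr_unique: assumes X: "X \<in> obj D" and a: "(S,T,f) \<in> arr FinSet"
  and h: "h \<in> hom D (copower D X S) (copower D X T)"
      "\<forall>s\<in>S. cmp D h (copower_inj D X S s) = copower_inj D X T (f s)"
  shows "h = copower_farr D X (S,T,f)"
proof -
  have fin: "finite S" using a by (auto simp: FinSet_arr)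
  show ?thesis using cop_map_unique[OF coproduct_copower[OF X fin] h] copower_farr_tuple[OF a] by simp
qed

lemma copower_farr_id:
  assumes X: "X \<in> obj D" and S: "finite S"
  shows "copower_farr D X (idt FinSet S) = idt D (copower D X S)"
proof -
  have "(S,S,restrict id S) \<in> arr FinSet" using S by (simp add: FinSet_arr)
  from copower_farr_unique[OF X this id_hom[OF copower_obj[OF X S]]] show ?thesis
    using id_left[OF copower_inj_hom[OF X S]] by simp
qed

lemma copower_farr_comp:
  assumes X: "X \<in> obj D" and a: "(S,T,f) \<in> arr FinSet" and b: "(T,U,g) \<in> arr FinSet"
  shows "copower_farr D X (cmp FinSet (T,U,g) (S,T,f)) = cmp D (copower_farr D X (T,U,g)) (copower_farr D X (S,T,f))"
proof -
  have fin: "finite S" "finite U" "f \<in> S \<rightarrow>\<^sub>E T"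
      "g \<in> T \<rightarrow>\<^sub>E U" using a b by (auto simp: FinSet_arr)
  have c: "(S,U,restrict (g \<circ> f) S) \<in> arr FinSet" using fin by (auto simp: FinSet_arr PiE_iff)
  note A = copower_farr_spec[OF X a] and B = copower_farr_spec[OF X b]
  have "cmp D (cmp D (copower_farr D X (T,U,g)) (copower_farr D X (S,T,f))) (copower_inj D X S s)
      = copower_inj D X U (g (f s))" if s: "s \<in> S" for s
  proof -
    have "f s \<in> T" using fin(3) s by auto
    then show ?thesis using assoc[OF copower_inj_hom[OF X fin(1) s] A(1) B(1)] A(2)[OF s] B(2) by simp
  qed
  then show ?thesis
    using copower_farr_unique[OF X c comp_hom[OF A(1) B(1)]] by simp
qed

lemma copower_functor_is_functor: assumes X: "X \<in> obj D" shows "is_functor FinSet D (copower_functor D X)"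
  unfolding is_functor_def copower_functor_def fst_conv snd_conv
proof (intro conjI ballI allI impI)
  fix S assume "S \<in> obj FinSet"
  then show "copower_fobj D X S \<in> obj D" "copower_farr D X (idt FinSet S) = idt D (copower_fobj D X S)"
    using copower_obj[OF X] copower_farr_id[OF X] by (simp_all add: copower_fobj_def)
next
  fix a assume "a \<in> arr FinSet"
  then show "copower_farr D X a \<in> hom D (copower_fobj D X (dom FinSet a)) (copower_fobj D X (cod FinSet a))"
    using copower_farr_spec(1)[OF X] by (cases a) (simp add: copower_fobj_def FinSet_arr)
next
  fix a b assume "a \<in> arr FinSet" "b \<in> arr FinSet" "cod FinSet a = dom FinSet b"
  then show "copower_farr D X (cmp FinSet b a) = cmp D (copower_farr D X b) (copower_farr D X a)"
    using copower_farr_comp[OF X] by (cases a, cases b) auto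
qed (simp_all add: copower_fobj_def copower_farr_def)

lemma copower_functor_iso: assumes X: "X \<in> obj D" and a: "(S,T,f) \<in> weq FinSet" shows
    "iso D (copower_farr D X (S,T,f))"
  using functor_iso[OF copower_functor_is_functor[OF X], of "(S,T,f)"] a category_FinSet by
      (simp add: copower_functor_def FinSet_weq_iso)

lemma copower_functor_initial: assumes X: "X \<in> obj D" shows "initial D (copower_fobj D X {})"
  using coproduct_empty_initial[OF coproduct_copower[OF X, of "{}"]] by (simp add: copower_fobj_def)

lemma copower_functor_cof: assumes X: "X \<in> obj D" and a: "(S,T,f) \<in> cof FinSet" shows
    "copower_farr D X (S,T,f) \<in> cof D"
proof -
  have fin: "finite S" "finite T" "f \<in> S \<rightarrow>\<^sub>E T" "inj_on f S" using a by
      (auto simp: FinSet_cof)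
  have a': "(S,T,f) \<in> arr FinSet" using fin by (simp add: FinSet_arr)
  define R where "R = T - f ` S"
  have finR: "finite R" using fin R_def by simp
  obtain Q p q where b: "binary_coproduct D (copower D X R) (copower D X S) Q p q" and qc: "q \<in> cof D"
    using binary_coproduct_exists[OF copower_obj[OF X finR] copower_obj[OF X fin(1)]] by blast
  have pq: "Q \<in> obj D" "p \<in> hom D (copower D X R) Q" "q \<in> hom D (copower D X S) Q"
      using b unfolding binary_coproduct_def by auto
  have bij: "bij_betw f S (f ` S)" using fin(4) by (simp add: bij_betw_def)
  note re = coproduct_reindex[OF coproduct_copower[OF X fin(1)] bij]
  have disj: "R \<inter> f ` S = {}" using R_def by auto
  have RT: "R \<union> f ` S = T" using R_def fin(3) by auto
  let ?inj = "\<lambda>t. if t \<in> R then cmp D p (copower_inj D X R t) else cmp D q (copower_inj D X S (inv_into S f t))"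
  have U: "coproduct D (\<lambda>_. X) T Q ?inj"
    using coproduct_union[OF coproduct_copower[OF X finR] re disj b] RT by simp
  let ?phi = "cop_map D Q ?inj T (copower D X T) (copower_inj D X T)"
  note cmpi = coproduct_comparison[OF U coproduct_copower[OF X fin(2)]]
  have "cmp D ?phi q = copower_farr D X (S,T,f)"
  proof (rule copower_farr_unique[OF X a'])
    show "cmp D ?phi q \<in> hom D (copower D X S) (copower D X T)" using pq cmpi by auto
    show "\<forall>s\<in>S. cmp D (cmp D ?phi q) (copower_inj D X S s) = copower_inj D X T (f s)"
    proof
      fix s assume s: "s \<in> S"
      have fs: "f s \<in> T" "f s \<notin> R" "inv_into S f (f s) = s" using s fin R_def by auto
      have "cmp D (cmp D ?phi q) (copower_inj D X S s) = cmp D ?phi (cmp D q (copower_inj D X S s))"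
        using assoc[OF copower_inj_hom[OF X fin(1) s] pq(3) cmpi(2)] by simp
      also have "cmp D q (copower_inj D X S s) = ?inj (f s)" using fs by simp
      also have "cmp D ?phi (?inj (f s)) = copower_inj D X T (f s)" using cmpi(3) fs(1) by blast
      finally show "cmp D (cmp D ?phi q) (copower_inj D X S s) = copower_inj D X T (f s)" .
    qed
  qed
  moreover have "cmp D ?phi q \<in> cof D"
    by (rule cof_comp[OF qc iso_cof[OF cmpi(1)]]) (use pq cmpi in \<open>simp add: hom_def\<close>)
  ultimately show ?thesis by simp
qed

lemma copower_farr_comp_eq_iff:
  assumes X: "X \<in> obj D" and a: "(S,T,f) \<in> arr FinSet"
    and h: "h \<in> hom D (copower D X T) Q" and u: "u \<in> hom D (copower D X S) Q"
  shows "cmp D h (copower_farr D X (S,T,f)) = u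
      \<longleftrightarrow> (\<forall>s\<in>S. cmp D h (copower_inj D X T (f s)) = cmp D u (copower_inj D X S s))"
proof -
  have S: "finite S" using a by (simp add: FinSet_arr)
  note F = copower_farr_spec[OF X a]
  have eq: "cmp D (cmp D h (copower_farr D X (S,T,f))) (copower_inj D X S s) = cmp D h (copower_inj D X T (f s))"
    if "s \<in> S" for s
    using assoc[OF copower_inj_hom[OF X S that] F(1) h] F(2)[OF that] by simp
  show ?thesis
  proof
    assume "cmp D h (copower_farr D X (S,T,f)) = u"
    then show "\<forall>s\<in>S. cmp D h (copower_inj D X T (f s)) = cmp D u (copower_inj D X S s)"
      using eq by simp
  next
    assume "\<forall>s\<in>S. cmp D h (copower_inj D X T (f s)) = cmp D u (copower_inj D X S s)"
    then show "cmp D h (copower_farr D X (S,T,f)) = u"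
      by (intro coproduct_arr_eqI[OF coproduct_copower[OF X S] comp_hom[OF F(1) h] u]) (simp add: eq)
  qed
qed

lemma copower_farr_pushout_univ:
  assumes X: "X \<in> obj D" and po: "pushout FinSet (A,B,i) (A,C,f) (B,P,j) (C,P,k)"
    and inj: "inj_on i A" and Q: "Q \<in> obj D"
    and u: "u \<in> hom D (copower D X B) Q" and v: "v \<in> hom D (copower D X C) Q"
    and uv: "cmp D u (copower_farr D X (A,B,i)) = cmp D v (copower_farr D X (A,C,f))"
  shows "\<exists>!h. h \<in> hom D (copower D X P) Q \<and> cmp D h (copower_farr D X (B,P,j)) = u
      \<and> cmp D h (copower_farr D X (C,P,k)) = v"
proof -
  note fin = FinSet_pushoutD[OF po]
  have ar: "(A,B,i) \<in> arr FinSet" "(A,C,f) \<in> arr FinSet" "(B,P,j) \<in> arr FinSet"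
      "(C,P,k) \<in> arr FinSet"
    using fin by (simp_all add: FinSet_arr)
  note Fi = copower_farr_spec[OF X ar(1)] and Ff = copower_farr_spec[OF X ar(2)]
  have "\<forall>a\<in>A. cmp D u (copower_inj D X B (i a))
      = cmp D (cmp D u (copower_farr D X (A,B,i))) (copower_inj D X A a)"
    "\<forall>a\<in>A. cmp D v (copower_inj D X C (f a))
        = cmp D (cmp D v (copower_farr D X (A,C,f))) (copower_inj D X A a)"
    using copower_farr_comp_eq_iff[OF X ar(1) u comp_hom[OF Fi(1) u]]
      copower_farr_comp_eq_iff[OF X ar(2) v comp_hom[OF Ff(1) v]] by simp_all
  then have "cmp D u (copower_inj D X B (i a)) = cmp D v (copower_inj D X C (f a))" if "a \<in> A" for a
    using uv that by simp
  then obtain g where gj: "\<And>b. b \<in> B \<Longrightarrow> g (j b) = cmp D u (copower_inj D X B b)"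
    and gk: "\<And>c. c \<in> C \<Longrightarrow> g (k c) = cmp D v (copower_inj D X C c)"
    using FinSet_pushout_glue[OF po inj, where x="\<lambda>b. cmp D u (copower_inj D X B b)" and y="\<lambda>c.
        cmp D v (copower_inj D X C c)"] by blast
  have cover: "P = j ` B \<union> k ` C" by (rule FinSet_pushout_cover[OF po])
  have ball_P: "(\<forall>p\<in>P. \<Phi> p)
      \<longleftrightarrow> (\<forall>b\<in>B. \<Phi> (j b)) \<and> (\<forall>c\<in>C. \<Phi> (k c))" for \<Phi>
    using cover by (simp add: ball_Un)
  have g: "\<forall>p\<in>P. g p \<in> hom D X Q"
    unfolding ball_P using gj gk comp_hom[OF copower_inj_hom[OF X fin(2)] u]
      comp_hom[OF copower_inj_hom[OF X fin(3)] v] by simp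
  have char: "cmp D h (copower_farr D X (B,P,j)) = u
      \<and> cmp D h (copower_farr D X (C,P,k)) = v
      \<longleftrightarrow> (\<forall>p\<in>P. cmp D h (copower_inj D X P p)
      = g p)" if h: "h \<in> hom D (copower D X P) Q" for h
    unfolding copower_farr_comp_eq_iff[OF X ar(3) h u] copower_farr_comp_eq_iff[OF X ar(4) h v] ball_P
    by (simp add: gj gk)
  note hc = cop_map_spec[OF coproduct_copower[OF X fin(4)] Q g]
  show ?thesis
  proof (rule ex1I, intro conjI)
    fix h assume "h \<in> hom D (copower D X P) Q \<and> cmp D h (copower_farr D X (B,P,j)) = u
        \<and> cmp D h (copower_farr D X (C,P,k)) = v"
    then show "h = cop_map D (copower D X P) (copower_inj D X P) P Q g"
      using char cop_map_unique[OF coproduct_copower[OF X fin(4)]] by blast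
  qed (use char hc in blast)+
qed

lemma copower_functor_pushout:
  assumes X: "X \<in> obj D" and po: "pushout FinSet i f j k" and ic: "i \<in> cof FinSet"
  shows "pushout D (copower_farr D X i) (copower_farr D X f) (copower_farr D X j) (copower_farr D X k)"
proof -
  from FinSet_pushout_tuples[OF po] obtain A B C P i' f' j' k'
    where sh: "i = (A,B,i')" "f = (A,C,f')" "j = (B,P,j')" "k = (C,P,k')"
    by blast
  have po': "pushout FinSet (A,B,i') (A,C,f') (B,P,j') (C,P,k')" using po sh by simp
  have inj: "inj_on i' A" using ic sh by (simp add: FinSet_cof)
  note fin = FinSet_pushoutD[OF po']
  have ar: "(A,B,i') \<in> arr FinSet" "(A,C,f') \<in> arr FinSet" "(B,P,j') \<in> arr FinSet"
      "(C,P,k') \<in> arr FinSet"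
    using fin by (simp_all add: FinSet_arr)
  note F = copower_farr_spec(1)[OF X ar(1)] copower_farr_spec(1)[OF X ar(2)]
    copower_farr_spec(1)[OF X ar(3)] copower_farr_spec(1)[OF X ar(4)]
  note H = FinSet.pushout_homs[OF po']
  have Fcomm: "cmp D (copower_farr D X (B,P,j')) (copower_farr D X (A,B,i'))
      = cmp D (copower_farr D X (C,P,k')) (copower_farr D X (A,C,f'))"
    using functor_comp[OF copower_functor_is_functor[OF X] H(1,3)]
      functor_comp[OF copower_functor_is_functor[OF X] H(2,4)] H(5)
    by (simp add: copower_functor_def)
  show ?thesis
    unfolding sh pushout_def
  proof (intro conjI ballI impI)
    show "cmp D (copower_farr D X (B,P,j')) (copower_farr D X (A,B,i'))
        = cmp D (copower_farr D X (C,P,k')) (copower_farr D X (A,C,f'))" by (rule Fcomm)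
    have cod: "cod D (copower_farr D X (A,B,i')) = copower D X B"
      "cod D (copower_farr D X (A,C,f')) = copower D X C"
      "cod D (copower_farr D X (B,P,j')) = copower D X P"
      using F by (simp_all add: hom_def)
    fix Q u v assume "Q \<in> obj D" "u \<in> hom D (cod D (copower_farr D X (A,B,i'))) Q"
      "v \<in> hom D (cod D (copower_farr D X (A,C,f'))) Q"
      "cmp D u (copower_farr D X (A,B,i')) = cmp D v (copower_farr D X (A,C,f'))"
    from copower_farr_pushout_univ[OF X po' inj this[unfolded cod]]
    show "\<exists>!h. h \<in> hom D (cod D (copower_farr D X (B,P,j'))) Q
        \<and> cmp D h (copower_farr D X (B,P,j')) = u \<and> cmp D h (copower_farr D X (C,P,k')) = v"
      unfolding cod .
  qed (use F in \<open>simp_all add: hom_def\<close>)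
qed

lemma pc_morphism_copower_functor: assumes X: "X \<in> obj D" shows "pc_morphism FinSet D (copower_functor D X)"
  unfolding pc_morphism_def
proof (intro conjI allI ballI impI)
  show "is_functor FinSet D (copower_functor D X)" by (rule copower_functor_is_functor[OF X])
next
  fix a assume "a \<in> cof FinSet"
  then show "farr (copower_functor D X) a \<in> cof D" using copower_functor_cof[OF X] by
      (cases a) (simp add: copower_functor_def)
next
  fix a assume a: "a \<in> weq FinSet"
  then obtain S T f where "a = (S,T,f)" by (cases a)
  then show "farr (copower_functor D X) a \<in> weq D" using copower_functor_iso[OF X] a
      iso_weq by (simp add: copower_functor_def)
next
  fix I assume "initial FinSet I"
  then show "initial D (fobj (copower_functor D X) I)" using copower_functor_initial[OF X] by
      (simp add: FinSet_initial_iff copower_functor_def)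
next
  fix i f j k assume "pushout FinSet i f j k" "i \<in> cof FinSet"
  then show "pushout D (farr (copower_functor D X) i) (farr (copower_functor D X) f) (farr (copower_functor D
      X) j) (farr (copower_functor D X) k)"
    using copower_functor_pushout[OF X] by (simp add: copower_functor_def)
qed

end


section \<open>Morphisms out of \<open>F\<^sub>*\<close> are copower functors\<close>

lemma pc_morphism_functor: "pc_morphism C D F \<Longrightarrow> is_functor C D F"
  unfolding pc_morphism_def by auto

lemma functor_point_comp:
  assumes F: "is_functor FinSet D F" and a: "(S,T,f) \<in> arr FinSet" and s: "s \<in> S"
  shows "cmp D (farr F (S,T,f)) (farr F (point S s)) = farr F (point T (f s))"
proof -
  have "point S s \<in> hom FinSet star S" "(S,T,f) \<in> hom FinSet S T"
    using a s point_hom by (auto simp: FinSet_arr hom_def)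
  from functor_comp[OF F this] show ?thesis using point_comp[OF a s] by simp
qed

context pre_cylinder begin

text \<open>The heart of freeness: preservation of the pushouts \<open>S \<union> {s} = {s} \<squnion>\<^bsub>{}\<^esub> S\<close>
  exhibits \<open>F S\<close> as a copower of \<open>F(*)\<close>.\<close>
lemma pc_morphism_coproduct:
  assumes F: "pc_morphism FinSet D F" and fin: "finite S"
  shows "coproduct D (\<lambda>_. fobj F star) S (fobj F S) (\<lambda>s. farr F (point S s))"
  using fin
proof (induction S rule: finite_induct)
  case empty
  have "initial D (fobj F {})" using F FinSet_initial_empty unfolding pc_morphism_def by auto
  then show ?case by (rule coproduct_empty)
next
  case (insert s S)
  note Ff = pc_morphism_functor[OF F]
  let ?i = "({}, {s}, \<lambda>_. undefined)" and ?f = "({}, S, \<lambda>_. undefined)"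
    and ?j = "({s}, insert s S, restrict id {s})" and ?k = "(S, insert s S, restrict id S)"
  have ar: "?i \<in> hom FinSet {} {s}" "?f \<in> hom FinSet {} S" "?j \<in> arr FinSet" "?k \<in> arr FinSet"
    using insert(1) by (auto simp: FinSet_hom FinSet_arr PiE_empty_fun)
  have "?i \<in> cof FinSet" by (auto simp: FinSet_cof PiE_empty_fun)
  then have "pushout D (farr F ?i) (farr F ?f) (farr F ?j) (farr F ?k)"
    using F FinSet_pushout_disjoint_union[of "{s}" S] insert(1,2) unfolding pc_morphism_def by simp
  moreover have "initial D (fobj F {})" using F FinSet_initial_empty unfolding pc_morphism_def by auto
  ultimately have b: "binary_coproduct D (fobj F {s}) (fobj F S) (fobj F (insert s S)) (farr F ?j) (farr F ?k)"
    using pushout_initial_binary_coproduct[of "farr F ?i" "farr F ?f" "farr F ?j" "farr F ?k"]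
      functor_hom[OF Ff ar(1)] functor_hom[OF Ff ar(2)] functor_hom[OF Ff FinSet.arr_hom[OF ar(3)]]
    by (simp add: hom_def)
  have "coproduct D (\<lambda>_. fobj F star) {s} (fobj F {s}) (\<lambda>_. farr F (point {s} s))"
    by (rule coproduct_singleton_iso[OF functor_iso[OF Ff point_iso category_FinSet] functor_hom[OF Ff point_hom]]) simp_all
  from coproduct_union[OF this insert(3) _ b]
  have "coproduct D (\<lambda>_. fobj F star) (insert s S) (fobj F (insert s S)) (\<lambda>t. if t \<in> {s}
      then cmp D (farr F ?j) (farr F (point {s} s)) else cmp D (farr F ?k) (farr F (point S t)))"
    using insert(2) by simp
  then show ?case
    by (rule coproduct_cong) (auto simp: functor_point_comp[OF Ff ar(3)] functor_point_comp[OF Ff ar(4)])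
qed

end


section \<open>Evaluation at the singleton is an equivalence\<close>

lemma natural_hom: "natural C D F G \<eta> \<Longrightarrow> X \<in> obj C
    \<Longrightarrow> \<eta> X \<in> hom D (fobj F X) (fobj G X)"
  unfolding natural_def by auto

lemma funcat_obj[simp]: "obj (funcat C D S) = S" by (simp add: funcat_def)
lemma funcat_arr: "(F,G,\<eta>) \<in> arr (funcat C D S)
    \<longleftrightarrow> F \<in> S \<and> G \<in> S \<and> natural C D F G \<eta>" by (simp add: funcat_def)
lemma funcat_dom[simp]: "dom (funcat C D S) (F,G,\<eta>) = F" by (simp add: funcat_def)
lemma funcat_cod[simp]: "cod (funcat C D S) (F,G,\<eta>) = G" by (simp add: funcat_def)
lemma funcat_cmp[simp]: "cmp (funcat C D S) (G',H,\<theta>) (F,G,\<eta>)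
    = (F,H,\<lambda>X. if X \<in> obj C then cmp D (\<theta> X) (\<eta> X) else undefined)"
  by (simp add: funcat_def)
lemma funcat_idt[simp]: "idt (funcat C D S) F
    = (F,F,\<lambda>X. if X \<in> obj C then idt D (fobj F X) else undefined)"
  by (simp add: funcat_def)
lemma funcat_hom: "(F',G',\<eta>) \<in> hom (funcat C D S) F G
    \<longleftrightarrow> F' = F \<and> G' = G \<and> F \<in> S \<and> G \<in> S \<and> natural C D F G \<eta>"
  by (auto simp: hom_def funcat_arr)

context cat begin

lemma natural_id: assumes "category A" "is_functor A C F"
  shows "natural A C F F (\<lambda>X. if X \<in> obj A then idt C (fobj F X) else undefined)"
  unfolding natural_def
proof (intro conjI ballI allI impI)
  fix X assume "X \<in> obj A" thus "(if X \<in> obj A then idt C (fobj F X) else undefined) \<in> hom C (fobj F X) (fobj F X)"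
    using assms(2) unfolding is_functor_def by auto
next
  fix f assume f: "f \<in> arr A"
  have o: "dom A f \<in> obj A" "cod A f \<in> obj A" using assms(1) f unfolding category_def by auto
  have h: "farr F f \<in> hom C (fobj F (dom A f)) (fobj F (cod A f))" using assms(2) f
      unfolding is_functor_def by auto
  show "cmp C (if cod A f \<in> obj A then idt C (fobj F (cod A f)) else undefined) (farr F f)
      = cmp C (farr F f) (if dom A f \<in> obj A then idt C (fobj F (dom A f)) else undefined)"
    using o id_left[OF h] id_right[OF h] by simp
qed simp

lemma natural_comp: assumes "category A" "is_functor A C F" "is_functor A C G" "is_functor A C H"
  "natural A C F G \<eta>" "natural A C G H \<theta>"
  shows "natural A C F H (\<lambda>X. if X \<in> obj A then cmp C (\<theta> X) (\<eta> X) else undefined)"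
  unfolding natural_def
proof (intro conjI ballI allI impI)
  fix X assume "X \<in> obj A" thus "(if X \<in> obj A then cmp C (\<theta> X) (\<eta> X) else undefined) \<in> hom C (fobj F X) (fobj H X)"
    using assms(5,6) unfolding natural_def by auto
next
  fix f assume f: "f \<in> arr A"
  let ?X = "dom A f" and ?Y = "cod A f"
  have o: "?X \<in> obj A" "?Y \<in> obj A" using assms(1) f unfolding category_def by auto
  have e: "\<eta> ?X \<in> hom C (fobj F ?X) (fobj G ?X)" "\<eta> ?Y \<in> hom C (fobj F ?Y) (fobj G ?Y)"
    "\<theta> ?X \<in> hom C (fobj G ?X) (fobj H ?X)" "\<theta> ?Y \<in> hom C (fobj G ?Y) (fobj H ?Y)"
    using assms(5,6) o unfolding natural_def by auto
  have n1: "cmp C (\<eta> ?Y) (farr F f) = cmp C (farr G f) (\<eta> ?X)"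
    and n2: "cmp C (\<theta> ?Y) (farr G f) = cmp C (farr H f) (\<theta> ?X)" using assms(5,6)
        f unfolding natural_def by auto
  have Ff: "farr F f \<in> hom C (fobj F ?X) (fobj F ?Y)" "farr G f \<in> hom C (fobj G ?X) (fobj G ?Y)"
    "farr H f \<in> hom C (fobj H ?X) (fobj H ?Y)"
    using assms(2,3,4) f unfolding is_functor_def by auto
  have "cmp C (cmp C (\<theta> ?Y) (\<eta> ?Y)) (farr F f) = cmp C (\<theta> ?Y) (cmp C (\<eta> ?Y) (farr F f))"
    using assoc[OF Ff(1) e(2) e(4)] by simp
  also have "\<dots> = cmp C (\<theta> ?Y) (cmp C (farr G f) (\<eta> ?X))" using n1 by simp
  also have "\<dots> = cmp C (cmp C (\<theta> ?Y) (farr G f)) (\<eta> ?X)" using assoc[OF e(1) Ff(2) e(4)] .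
  also have "\<dots> = cmp C (cmp C (farr H f) (\<theta> ?X)) (\<eta> ?X)" using n2 by simp
  also have "\<dots> = cmp C (farr H f) (cmp C (\<theta> ?X) (\<eta> ?X))" using assoc[OF e(1) e(3) Ff(3)] by simp
  finally show "cmp C (if ?Y \<in> obj A then cmp C (\<theta> ?Y) (\<eta> ?Y) else undefined) (farr F f)
      = cmp C (farr H f) (if ?X \<in> obj A then cmp C (\<theta> ?X) (\<eta> ?X) else undefined)" using o by simp
qed simp

lemma natural_inverse:
  assumes A: "category A" and F: "is_functor A C F" and G: "is_functor A C G"
    and \<eta>: "natural A C F G \<eta>"
    and \<psi>: "\<And>X. X \<in> obj A
        \<Longrightarrow> \<psi> X \<in> hom C (fobj G X) (fobj F X)
        \<and> cmp C (\<psi> X) (\<eta> X) = idt C (fobj F X) \<and> cmp C (\<eta> X) (\<psi> X) = idt C (fobj G X)"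
    and ext: "\<And>X. X \<notin> obj A \<Longrightarrow> \<psi> X = undefined"
  shows "natural A C G F \<psi>"
  unfolding natural_def
proof (intro conjI ballI allI impI)
  fix f assume f: "f \<in> arr A"
  let ?X = "dom A f" and ?Y = "cod A f"
  have o: "?X \<in> obj A" "?Y \<in> obj A" using A f unfolding category_def by auto
  have Ff: "farr F f \<in> hom C (fobj F ?X) (fobj F ?Y)" "farr G f \<in> hom C (fobj G ?X) (fobj G ?Y)"
    using F G f unfolding is_functor_def by auto
  note eX = natural_hom[OF \<eta> o(1)] and eY = natural_hom[OF \<eta> o(2)]
  note pX = \<psi>[OF o(1)] and pY = \<psi>[OF o(2)]
  have n: "cmp C (\<eta> ?Y) (farr F f) = cmp C (farr G f) (\<eta> ?X)" using \<eta> f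
      unfolding natural_def by auto
  show "cmp C (\<psi> ?Y) (farr G f) = cmp C (farr F f) (\<psi> ?X)"
  proof (rule iso_cancel_right[OF isoI[OF eX conjunct1[OF pX]] eX])
    show "cmp C (\<psi> ?Y) (farr G f) \<in> hom C (fobj G ?X) (fobj F ?Y)"
      "cmp C (farr F f) (\<psi> ?X) \<in> hom C (fobj G ?X) (fobj F ?Y)"
      using pX pY Ff by auto
    have "cmp C (cmp C (\<psi> ?Y) (farr G f)) (\<eta> ?X) = cmp C (cmp C (\<psi> ?Y) (\<eta> ?Y)) (farr F f)"
      using assoc[OF eX Ff(2) conjunct1[OF pY]] n assoc[OF Ff(1) eY conjunct1[OF pY]] by simp
    also have "\<dots> = cmp C (farr F f) (cmp C (\<psi> ?X) (\<eta> ?X))"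
      using pY pX id_left[OF Ff(1)] id_right[OF Ff(1)] by simp
    also have "\<dots> = cmp C (cmp C (farr F f) (\<psi> ?X)) (\<eta> ?X)"
      using assoc[OF eX conjunct1[OF pX] Ff(1)] by simp
    finally show "cmp C (cmp C (\<psi> ?Y) (farr G f)) (\<eta> ?X)
        = cmp C (cmp C (farr F f) (\<psi> ?X)) (\<eta> ?X)" .
  qed (use pX in auto)
qed (use \<psi> ext in auto)

lemma iso_funcatI:
  assumes A: "category A" and F: "is_functor A C F" and G: "is_functor A C G"
    and \<eta>: "natural A C F G \<eta>" and iso: "\<forall>X\<in>obj A. iso C (\<eta> X)" and
        S: "F \<in> S" "G \<in> S"
  shows "iso (funcat A C S) (F,G,\<eta>)"
proof -
  define inverse where "inverse X g
      \<longleftrightarrow> g \<in> hom C (fobj G X) (fobj F X)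
      \<and> cmp C g (\<eta> X) = idt C (fobj F X) \<and> cmp C (\<eta> X) g = idt C (fobj G X)" for X g
  define \<psi> where "\<psi> X = (if X \<in> obj A then (SOME g. inverse X g) else undefined)" for X
  have \<psi>: "inverse X (\<psi> X)" if X: "X \<in> obj A" for X
  proof -
    from isoE[OF bspec[OF iso X] natural_hom[OF \<eta> X]] obtain g where "inverse X g"
      unfolding inverse_def by blast
    then show ?thesis using X someI[of "inverse X"] by (simp add: \<psi>_def)
  qed
  have nat: "natural A C G F \<psi>"
    by (rule natural_inverse[OF A F G \<eta>]) (use \<psi> in \<open>simp_all add: inverse_def \<psi>_def\<close>)
  show ?thesis unfolding iso_def
  proof (intro conjI bexI)
    show "(F,G,\<eta>) \<in> arr (funcat A C S)" using S \<eta> by (simp add: funcat_arr)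
    show "(G,F,\<psi>) \<in> hom (funcat A C S) (cod (funcat A C S) (F,G,\<eta>)) (dom (funcat A C S) (F,G,\<eta>))"
      using S nat by (simp add: funcat_hom)
    show "cmp (funcat A C S) (G,F,\<psi>) (F,G,\<eta>) = idt (funcat A C S) (dom (funcat A C S) (F,G,\<eta>))"
      "cmp (funcat A C S) (F,G,\<eta>) (G,F,\<psi>) = idt (funcat A C S) (cod (funcat A C S) (F,G,\<eta>))"
      using \<psi> by (auto intro!: ext simp: inverse_def)
  qed
qed

end

definition copower_map :: "('o,'a,'z) cat_scheme \<Rightarrow> 'a \<Rightarrow> nat set \<Rightarrow> 'a" where
  "copower_map D g = (\<lambda>S. if S \<in> obj FinSet
     then cop_map D (copower D (dom D g) S) (copower_inj D (dom D g) S) S (copower D (cod D g) S)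
       (\<lambda>s. cmp D (copower_inj D (cod D g) S s) g)
     else undefined)"

definition copower_ftor where
  "copower_ftor D =
    (\<lambda>X. if X \<in> obj D then copower_functor D X else undefined,
     \<lambda>g. if g \<in> arr D then (copower_functor D (dom D g), copower_functor D (cod D g), copower_map D g)
          else undefined)"

text \<open>The canonical isomorphism \<open>F S \<rightarrow> \<Coprod>\<^sub>S F(*)\<close>, out of the coproduct of
  \<open>pc_morphism_coproduct\<close>.\<close>
definition comparison where
  "comparison D F = (\<lambda>S. if S \<in> obj FinSet
     then cop_map D (fobj F S) (\<lambda>s. farr F (point S s)) S (copower D (fobj F star) S)
       (copower_inj D (fobj F star) S)
     else undefined)"

definition eval_unit where
  "eval_unit D F =
    (if F \<in> obj (PCMor FinSet D) then (F, copower_functor D (fobj F star), comparison D F) else undefined)"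

definition eval_counit where "eval_counit D = (\<lambda>X. if X \<in> obj D then idt D X else undefined)"

lemma PCMor_obj: "obj (PCMor C D) = {F. pc_morphism C D F}" by (simp add: PCMor_def)
lemma PCMor_arr: "(F,G,\<eta>) \<in> arr (PCMor C D)
    \<longleftrightarrow> pc_morphism C D F \<and> pc_morphism C D G \<and> natural C D F G \<eta>"
  by (simp add: PCMor_def funcat_arr)
lemma PCMor_hom: "(F',G',\<eta>) \<in> hom (PCMor C D) F G
    \<longleftrightarrow> F' = F \<and> G' = G \<and> pc_morphism C D F \<and> pc_morphism C D G
    \<and> natural C D F G \<eta>"
  by (simp add: PCMor_def funcat_hom)

lemma PCMor_idt: "idt (PCMor C D) F = (F,F,\<lambda>X. if X \<in> obj C then idt D (fobj F X) else undefined)"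
  by (simp add: PCMor_def)
lemma PCMor_cmp: "cmp (PCMor C D) (G',H,\<theta>) (F,G,\<eta>)
    = (F,H,\<lambda>X. if X \<in> obj C then cmp D (\<theta> X) (\<eta> X) else undefined)"
  by (simp add: PCMor_def)
lemma PCMor_dom: "dom (PCMor C D) (F,G,\<eta>) = F" by (simp add: PCMor_def)
lemma PCMor_cod: "cod (PCMor C D) (F,G,\<eta>) = G" by (simp add: PCMor_def)

context pre_cylinder begin

lemma copower_map_spec: assumes g: "g \<in> hom D X Y" and S: "finite S"
  shows "copower_map D g S \<in> hom D (copower D X S) (copower D Y S)"
      "\<forall>s\<in>S. cmp D (copower_map D g S) (copower_inj D X S s) = cmp D (copower_inj D Y S s) g"
proof -
  have XY: "X \<in> obj D" "Y \<in> obj D" using hom_obj[OF g] by auto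
  have gd: "dom D g = X" "cod D g = Y" using g by (auto simp: hom_def)
  have "\<forall>s\<in>S. cmp D (copower_inj D Y S s) g \<in> hom D X (copower D Y S)" using
      copower_inj_hom[OF XY(2) S] g by auto
  note c = cop_map_spec[OF coproduct_copower[OF XY(1) S] copower_obj[OF XY(2) S] this]
  show "copower_map D g S \<in> hom D (copower D X S) (copower D Y S)"
      "\<forall>s\<in>S. cmp D (copower_map D g S) (copower_inj D X S s) = cmp D (copower_inj D Y S s) g"
    using c S gd by (simp_all add: copower_map_def)
qed

lemma copower_map_unique: assumes g: "g \<in> hom D X Y" and S: "finite S" and h: "h \<in> hom D (copower D X S) (copower D Y S)"
  "\<forall>s\<in>S. cmp D h (copower_inj D X S s) = cmp D (copower_inj D Y S s) g"
  shows "h = copower_map D g S"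
proof -
  have XY: "X \<in> obj D" "Y \<in> obj D" using hom_obj[OF g] by auto
  have gd: "dom D g = X" "cod D g = Y" using g by (auto simp: hom_def)
  show ?thesis using cop_map_unique[OF coproduct_copower[OF XY(1) S] h] S gd by (simp add: copower_map_def)
qed

lemma copower_map_farr:
  assumes g: "g \<in> hom D X Y" and a: "(S,T,f) \<in> arr FinSet"
  shows "cmp D (copower_map D g T) (copower_farr D X (S,T,f)) = cmp D (copower_farr D Y (S,T,f)) (copower_map D g S)"
proof (rule coproduct_arr_eqI[OF coproduct_copower])
  have XY: "X \<in> obj D" "Y \<in> obj D" using hom_obj[OF g] by auto
  have fin: "finite S" "finite T" "f \<in> S \<rightarrow>\<^sub>E T" using a by (auto simp: FinSet_arr)
  note GX = copower_farr_spec[OF XY(1) a] and GY = copower_farr_spec[OF XY(2) a]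
    and mS = copower_map_spec[OF g fin(1)] and mT = copower_map_spec[OF g fin(2)]
  show "X \<in> obj D" "finite S" by (fact XY(1), fact fin(1))
  show "cmp D (copower_map D g T) (copower_farr D X (S,T,f)) \<in> hom D (copower D X S) (copower D Y T)"
    "cmp D (copower_farr D Y (S,T,f)) (copower_map D g S) \<in> hom D (copower D X S) (copower D Y T)"
    using GX GY mS mT by auto
  show "\<forall>s\<in>S. cmp D (cmp D (copower_map D g T) (copower_farr D X (S,T,f))) (copower_inj D X S s)
      = cmp D (cmp D (copower_farr D Y (S,T,f)) (copower_map D g S)) (copower_inj D X S s)"
  proof
    fix s assume s: "s \<in> S"
    note iX = copower_inj_hom[OF XY(1) fin(1) s] and iY = copower_inj_hom[OF XY(2) fin(1) s]
    have "f s \<in> T" using fin s by auto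
    then have "cmp D (cmp D (copower_map D g T) (copower_farr D X (S,T,f))) (copower_inj D X S s)
        = cmp D (copower_inj D Y T (f s)) g"
      using assoc[OF iX GX(1) mT(1)] GX(2)[OF s] mT(2) by simp
    also have "\<dots> = cmp D (cmp D (copower_farr D Y (S,T,f)) (copower_map D g S)) (copower_inj D X S s)"
      using assoc[OF iX mS(1) GY(1)] mS(2) s assoc[OF g iY GY(1)] GY(2)[OF s] by simp
    finally show "cmp D (cmp D (copower_map D g T) (copower_farr D X (S,T,f))) (copower_inj D X S s)
        = cmp D (cmp D (copower_farr D Y (S,T,f)) (copower_map D g S)) (copower_inj D X S s)" .
  qed
qed

lemma natural_copower_map:
  assumes g: "g \<in> hom D X Y"
  shows "natural FinSet D (copower_functor D X) (copower_functor D Y) (copower_map D g)"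
  unfolding natural_def
proof (intro conjI ballI allI impI)
  fix S assume "S \<in> obj FinSet"
  then show "copower_map D g S \<in> hom D (fobj (copower_functor D X) S) (fobj (copower_functor D Y) S)"
    using copower_map_spec[OF g] by (simp add: copower_functor_def copower_fobj_def)
next
  fix a assume "a \<in> arr FinSet"
  then show "cmp D (copower_map D g (cod FinSet a)) (farr (copower_functor D X) a)
      = cmp D (farr (copower_functor D Y) a) (copower_map D g (dom FinSet a))"
    using copower_map_farr[OF g] by (cases a) (simp add: copower_functor_def)
qed (simp add: copower_map_def)

lemma copower_map_id:
  assumes X: "X \<in> obj D"
  shows "copower_map D (idt D X) = (\<lambda>S. if S \<in> obj FinSet then idt D (copower D X S) else undefined)"
proof
  fix S show "copower_map D (idt D X) S = (if S \<in> obj FinSet then idt D (copower D X S) else undefined)"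
  proof (cases "finite S")
    case True
    have "idt D (copower D X S) = copower_map D (idt D X) S"
      by (rule copower_map_unique[OF id_hom[OF X] True id_hom[OF copower_obj[OF X True]]])
        (simp add: id_left[OF copower_inj_hom[OF X True]] id_right[OF copower_inj_hom[OF X True]])
    then show ?thesis using True by simp
  qed (simp add: copower_map_def)
qed

lemma copower_map_comp:
  assumes f: "f \<in> hom D X Y" and g: "g \<in> hom D Y Z"
  shows "copower_map D (cmp D g f)
      = (\<lambda>S. if S \<in> obj FinSet then cmp D (copower_map D g S) (copower_map D f S) else undefined)"
proof
  fix S show "copower_map D (cmp D g f) S
      = (if S \<in> obj FinSet then cmp D (copower_map D g S) (copower_map D f S) else undefined)"
  proof (cases "finite S")
    case S: True
    have o: "X \<in> obj D" "Y \<in> obj D" "Z \<in> obj D" using hom_obj[OF f] hom_obj[OF g] by auto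
    note ef = copower_map_spec[OF f S] and eg = copower_map_spec[OF g S]
    have "cmp D (cmp D (copower_map D g S) (copower_map D f S)) (copower_inj D X S s)
        = cmp D (copower_inj D Z S s) (cmp D g f)" if s: "s \<in> S" for s
    proof -
      note iX = copower_inj_hom[OF o(1) S s] and iY = copower_inj_hom[OF o(2) S s]
        and iZ = copower_inj_hom[OF o(3) S s]
      have "cmp D (cmp D (copower_map D g S) (copower_map D f S)) (copower_inj D X S s)
          = cmp D (cmp D (copower_map D g S) (copower_inj D Y S s)) f"
        using assoc[OF iX ef(1) eg(1)] ef(2) s assoc[OF f iY eg(1)] by simp
      also have "\<dots> = cmp D (copower_inj D Z S s) (cmp D g f)"
        using eg(2) s assoc[OF f g iZ] by simp
      finally show ?thesis .
    qed
    then have "cmp D (copower_map D g S) (copower_map D f S) = copower_map D (cmp D g f) S"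
      using copower_map_unique[OF comp_hom[OF f g] S comp_hom[OF ef(1) eg(1)]] by blast
    then show ?thesis using S by simp
  qed (simp add: copower_map_def)
qed

lemma copower_ftor_is_functor: "is_functor D (PCMor FinSet D) (copower_ftor D)"
  unfolding is_functor_def
proof (intro conjI ballI allI impI)
  fix X assume "X \<in> obj D"
  then show "fobj (copower_ftor D) X \<in> obj (PCMor FinSet D)"
    using pc_morphism_copower_functor by (simp add: copower_ftor_def PCMor_obj)
  show "farr (copower_ftor D) (idt D X) = idt (PCMor FinSet D) (fobj (copower_ftor D) X)"
    using \<open>X \<in> obj D\<close> copower_map_id id_hom
    by (auto intro!: ext simp: copower_ftor_def PCMor_idt hom_def copower_functor_def copower_fobj_def)
next
  fix g assume "g \<in> arr D"
  then show "farr (copower_ftor D) g \<in> hom (PCMor FinSet D) (fobj (copower_ftor D) (dom D g)) (fobj (copower_ftor D) (cod D g))"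
    using pc_morphism_copower_functor natural_copower_map arr_hom hom_obj[OF arr_hom]
    by (simp add: copower_ftor_def PCMor_hom)
next
  fix f g assume "f \<in> arr D" "g \<in> arr D" "cod D f = dom D g"
  moreover have "cmp D g f \<in> arr D" using calculation comp_hom[OF arr_hom[of f]] arr_hom[of g]
    by (auto simp: hom_def)
  ultimately show "farr (copower_ftor D) (cmp D g f)
      = cmp (PCMor FinSet D) (farr (copower_ftor D) g) (farr (copower_ftor D) f)"
    using copower_map_comp[of f "dom D f" "cod D f" g "cod D g"] comp_hom[OF arr_hom[of f]]
    by (simp add: copower_ftor_def PCMor_cmp hom_def)
qed (simp_all add: copower_ftor_def)

lemma pc_morphism_star_obj: assumes "pc_morphism FinSet D F" shows "fobj F star \<in> obj D"
proof -
  have "\<forall>X\<in>obj FinSet. fobj F X \<in> obj D" using pc_morphism_functor[OF assms]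
      unfolding is_functor_def by blast
  thus ?thesis using star_obj by blast
qed

lemma evf_is_functor: "is_functor (PCMor FinSet D) D (evf D)"
  unfolding is_functor_def
proof (intro conjI ballI allI impI)
  fix F assume "F \<in> obj (PCMor FinSet D)"
  then show "fobj (evf D) F \<in> obj D" using pc_morphism_star_obj by (auto simp: evf_def PCMor_obj)
next
  fix t assume t: "t \<in> arr (PCMor FinSet D)"
  then obtain F G \<eta> where tt: "t = (F,G,\<eta>)" by (cases t)
  have a: "pc_morphism FinSet D F" "pc_morphism FinSet D G" "natural FinSet D F G \<eta>" using
      t tt by (auto simp: PCMor_arr)
  show "farr (evf D) t \<in> hom D (fobj (evf D) (dom (PCMor FinSet D) t)) (fobj (evf D) (cod (PCMor FinSet D) t))"
    using t tt a natural_hom[OF a(3), of star] by (simp add: evf_def PCMor_obj PCMor_dom PCMor_cod star_def)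
next
  fix F assume F: "F \<in> obj (PCMor FinSet D)"
  then have Fp: "pc_morphism FinSet D F" by (simp add: PCMor_obj)
  have "idt (PCMor FinSet D) F \<in> arr (PCMor FinSet D)"
    using natural_id[OF category_FinSet pc_morphism_functor[OF Fp]] Fp by (simp add: PCMor_idt PCMor_arr)
  then show "farr (evf D) (idt (PCMor FinSet D) F) = idt D (fobj (evf D) F)"
      using F by (simp add: evf_def PCMor_idt star_def)
next
  fix t1 t2 assume t1: "t1 \<in> arr (PCMor FinSet D)" and t2: "t2 \<in> arr (PCMor FinSet D)"
    and c: "cod (PCMor FinSet D) t1 = dom (PCMor FinSet D) t2"
  obtain F G \<eta> where tt1: "t1 = (F,G,\<eta>)" by (cases t1)
  obtain G' H \<theta> where tt2: "t2 = (G',H,\<theta>)" by (cases t2)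
  have GG: "G' = G" using c tt1 tt2 by (simp add: PCMor_dom PCMor_cod)
  have a: "pc_morphism FinSet D F" "pc_morphism FinSet D G" "pc_morphism FinSet D H"
      "natural FinSet D F G \<eta>" "natural FinSet D G H \<theta>"
    using t1 t2 tt1 tt2 GG by (auto simp: PCMor_arr)
  have "cmp (PCMor FinSet D) t2 t1 \<in> arr (PCMor FinSet D)"
    using natural_comp[OF category_FinSet pc_morphism_functor[OF a(1)] pc_morphism_functor[OF a(2)]
        pc_morphism_functor[OF a(3)] a(4,5)] a tt1 tt2
    by (simp add: PCMor_cmp PCMor_arr)
  then show "farr (evf D) (cmp (PCMor FinSet D) t2 t1) = cmp D (farr (evf D) t2) (farr (evf D) t1)"
    using t1 t2 tt1 tt2 by (simp add: evf_def PCMor_cmp star_def)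
next
  fix F assume "F \<notin> obj (PCMor FinSet D)" thus "fobj (evf D) F = undefined" by (simp add: evf_def)
next
  fix t assume "t \<notin> arr (PCMor FinSet D)" thus "farr (evf D) t = undefined" by (simp add: evf_def)
qed

lemma comparison_spec: assumes F: "pc_morphism FinSet D F" and S: "finite S"
  shows "comparison D F S \<in> hom D (fobj F S) (copower D (fobj F star) S)" "iso D (comparison D F S)"
    "\<forall>s\<in>S. cmp D (comparison D F S) (farr F (point S s)) = copower_inj D (fobj F star) S s"
proof -
  have so: "fobj F star \<in> obj D" using pc_morphism_star_obj[OF F] .
  note c = coproduct_comparison[OF pc_morphism_coproduct[OF F S] coproduct_copower[OF so S]]
  show "comparison D F S \<in> hom D (fobj F S) (copower D (fobj F star) S)" "iso D (comparison D F S)"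
    "\<forall>s\<in>S. cmp D (comparison D F S) (farr F (point S s)) = copower_inj D (fobj F star) S s"
    using c S by (simp_all add: comparison_def)
qed

lemma comparison_farr:
  assumes F: "pc_morphism FinSet D F" and a: "(S,T,f) \<in> arr FinSet"
  shows "cmp D (comparison D F T) (farr F (S,T,f)) = cmp D (copower_farr D (fobj F star) (S,T,f)) (comparison D F S)"
proof (rule coproduct_arr_eqI[OF pc_morphism_coproduct[OF F]])
  have fin: "finite S" "finite T" "f \<in> S \<rightarrow>\<^sub>E T" using a by (auto simp: FinSet_arr)
  have so: "fobj F star \<in> obj D" using pc_morphism_star_obj[OF F] .
  note Ff = pc_morphism_functor[OF F]
  have "(S,T,f) \<in> hom FinSet S T" using a by (simp add: hom_def)
  note FA = functor_hom[OF Ff this] and GA = copower_farr_spec[OF so a]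
    and tS = comparison_spec[OF F fin(1)] and tT = comparison_spec[OF F fin(2)]
  show "finite S" by (rule fin(1))
  show "cmp D (comparison D F T) (farr F (S,T,f)) \<in> hom D (fobj F S) (copower D (fobj F star) T)"
    "cmp D (copower_farr D (fobj F star) (S,T,f)) (comparison D F S) \<in> hom D (fobj F S) (copower D (fobj F star) T)"
    using FA tT GA tS by auto
  show "\<forall>s\<in>S. cmp D (cmp D (comparison D F T) (farr F (S,T,f))) (farr F (point S s))
      = cmp D (cmp D (copower_farr D (fobj F star) (S,T,f)) (comparison D F S)) (farr F (point S s))"
  proof
    fix s assume s: "s \<in> S"
    note Fp = functor_hom[OF Ff point_hom[OF fin(1) s]]
    have "f s \<in> T" using fin s by auto
    then have "cmp D (cmp D (comparison D F T) (farr F (S,T,f))) (farr F (point S s))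
        = copower_inj D (fobj F star) T (f s)"
      using assoc[OF Fp FA tT(1)] functor_point_comp[OF Ff a s] tT(3) by simp
    also have "\<dots> = cmp D (cmp D (copower_farr D (fobj F star) (S,T,f)) (comparison D F S)) (farr F (point S s))"
      using assoc[OF Fp tS(1) GA(1)] tS(3) GA(2)[OF s] s by simp
    finally show "cmp D (cmp D (comparison D F T) (farr F (S,T,f))) (farr F (point S s))
        = cmp D (cmp D (copower_farr D (fobj F star) (S,T,f)) (comparison D F S)) (farr F (point S s))" .
  qed
qed

lemma natural_comparison:
  assumes F: "pc_morphism FinSet D F"
  shows "natural FinSet D F (copower_functor D (fobj F star)) (comparison D F)"
  unfolding natural_def
proof (intro conjI ballI allI impI)
  fix S assume "S \<in> obj FinSet"
  then show "comparison D F S \<in> hom D (fobj F S) (fobj (copower_functor D (fobj F star)) S)"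
    using comparison_spec[OF F] by (simp add: copower_functor_def copower_fobj_def)
next
  fix a assume "a \<in> arr FinSet"
  then show "cmp D (comparison D F (cod FinSet a)) (farr F a)
      = cmp D (farr (copower_functor D (fobj F star)) a) (comparison D F (dom FinSet a))"
    using comparison_farr[OF F] by (cases a) (simp add: copower_functor_def)
qed (simp add: comparison_def)

end

context pre_cylinder begin

lemma comparison_natural:
  assumes F: "pc_morphism FinSet D F" and F': "pc_morphism FinSet D F'"
    and \<sigma>: "natural FinSet D F F' \<sigma>" and S: "finite S"
  shows "cmp D (comparison D F' S) (\<sigma> S) = cmp D (copower_map D (\<sigma> star) S) (comparison D F S)"
proof (rule coproduct_arr_eqI[OF pc_morphism_coproduct[OF F S]])
  have \<sigma>star: "\<sigma> star \<in> hom D (fobj F star) (fobj F' star)" and \<sigma>S: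
      "\<sigma> S \<in> hom D (fobj F S) (fobj F' S)"
    using natural_hom[OF \<sigma>] S by (simp_all add: star_def)
  note t = comparison_spec[OF F S] and t' = comparison_spec[OF F' S] and m =
      copower_map_spec[OF \<sigma>star S]
  show "cmp D (comparison D F' S) (\<sigma> S) \<in> hom D (fobj F S) (copower D (fobj F' star) S)"
    "cmp D (copower_map D (\<sigma> star) S) (comparison D F S) \<in> hom D (fobj F S) (copower D (fobj F' star) S)"
    using t t' m \<sigma>S by auto
  show "\<forall>s\<in>S. cmp D (cmp D (comparison D F' S) (\<sigma> S)) (farr F (point S s))
      = cmp D (cmp D (copower_map D (\<sigma> star) S) (comparison D F S)) (farr F (point S s))"
  proof
    fix s assume s: "s \<in> S"
    have p: "point S s \<in> hom FinSet star S" using point_hom[OF S s] .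
    note Fp = functor_hom[OF pc_morphism_functor[OF F] p]
      and F'p = functor_hom[OF pc_morphism_functor[OF F'] p]
    have "point S s \<in> arr FinSet" "dom FinSet (point S s) = star" "cod FinSet (point S s) = S"
      using p by (simp_all add: hom_def)
    moreover have "\<forall>f\<in>arr FinSet. cmp D (\<sigma> (cod FinSet f)) (farr F f)
        = cmp D (farr F' f) (\<sigma> (dom FinSet f))"
      using \<sigma> unfolding natural_def by blast
    ultimately have nat: "cmp D (\<sigma> S) (farr F (point S s)) = cmp D (farr F' (point S s)) (\<sigma> star)"
      by force
    have "cmp D (cmp D (comparison D F' S) (\<sigma> S)) (farr F (point S s))
        = cmp D (cmp D (comparison D F' S) (farr F' (point S s))) (\<sigma> star)"
      using assoc[OF Fp \<sigma>S t'(1)] nat assoc[OF \<sigma>star F'p t'(1)] by simp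
    also have "\<dots> = cmp D (copower_inj D (fobj F' star) S s) (\<sigma> star)" using t'(3) s by simp
    also have "\<dots> = cmp D (cmp D (copower_map D (\<sigma> star) S) (comparison D F S)) (farr F (point S s))"
      using assoc[OF Fp t(1) m(1)] t(3) m(2) s by simp
    finally show "cmp D (cmp D (comparison D F' S) (\<sigma> S)) (farr F (point S s))
        = cmp D (cmp D (copower_map D (\<sigma> star) S) (comparison D F S)) (farr F (point S s))" .
  qed
qed

lemma natiso_unit:
  "natiso (PCMor FinSet D) (PCMor FinSet D) (idf (PCMor FinSet D)) (fcompose (PCMor FinSet D) (copower_ftor D) (evf D)) (eval_unit D)"
  unfolding natiso_def natural_def
proof (intro conjI ballI allI impI)
  fix F assume F: "F \<in> obj (PCMor FinSet D)"
  then have Fp: "pc_morphism FinSet D F" by (simp add: PCMor_obj)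
  have so: "fobj F star \<in> obj D" using pc_morphism_star_obj[OF Fp] .
  have e: "fobj (fcompose (PCMor FinSet D) (copower_ftor D) (evf D)) F = copower_functor D (fobj F star)"
    "fobj (idf (PCMor FinSet D)) F = F"
    using F so by (simp_all add: fcompose_def evf_def copower_ftor_def idf_def)
  show "eval_unit D F \<in> hom (PCMor FinSet D) (fobj (idf (PCMor FinSet D)) F) (fobj (fcompose (PCMor FinSet
      D) (copower_ftor D) (evf D)) F)"
    using e F Fp pc_morphism_copower_functor[OF so] natural_comparison[OF Fp]
    by (simp add: eval_unit_def PCMor_hom)
  show "iso (PCMor FinSet D) (eval_unit D F)"
    using iso_funcatI[OF category_FinSet pc_morphism_functor[OF Fp] copower_functor_is_functor[OF so]
        natural_comparison[OF Fp], of "{F. pc_morphism FinSet D F}"]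
      comparison_spec(2)[OF Fp] Fp pc_morphism_copower_functor[OF so] F
    by (simp add: eval_unit_def PCMor_def)
next
  fix t assume t: "t \<in> arr (PCMor FinSet D)"
  then obtain F F' \<sigma> where tt: "t = (F,F',\<sigma>)" by (cases t)
  have a: "pc_morphism FinSet D F" "pc_morphism FinSet D F'" "natural FinSet D F F' \<sigma>"
    using t tt by (auto simp: PCMor_arr)
  have \<sigma>star: "\<sigma> star \<in> arr D" "dom D (\<sigma> star) = fobj F star"
      "cod D (\<sigma> star) = fobj F' star"
    using natural_hom[OF a(3)] by (auto simp: hom_def star_def)
  have FF: "F \<in> obj (PCMor FinSet D)" "F' \<in> obj (PCMor FinSet D)" using a by (auto simp: PCMor_obj)
  have "cmp (PCMor FinSet D) (eval_unit D (cod (PCMor FinSet D) t)) (farr (idf (PCMor FinSet D)) t)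
      = (F, copower_functor D (fobj F' star), \<lambda>S. if S \<in> obj FinSet then cmp D (comparison D F' S) (\<sigma> S) else undefined)"
    using t tt FF by (simp add: idf_def eval_unit_def PCMor_cod PCMor_cmp)
  also have "\<dots> = (F, copower_functor D (fobj F' star), \<lambda>S. if S \<in> obj FinSet then cmp D
      (copower_map D (\<sigma> star) S) (comparison D F S) else undefined)"
    using comparison_natural[OF a] by (simp cong: if_cong)
  also have "\<dots> = cmp (PCMor FinSet D) (farr (fcompose (PCMor FinSet D) (copower_ftor D) (evf D)) t)
      (eval_unit D (dom (PCMor FinSet D) t))"
    using t tt FF \<sigma>star by (simp add: fcompose_def evf_def copower_ftor_def eval_unit_def PCMor_dom PCMor_cmp)
  finally show "cmp (PCMor FinSet D) (eval_unit D (cod (PCMor FinSet D) t)) (farr (idf (PCMor FinSet D)) t)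
      = cmp (PCMor FinSet D) (farr (fcompose (PCMor FinSet D) (copower_ftor D) (evf D)) t) (eval_unit D (dom (PCMor FinSet D) t))" .
qed (simp add: eval_unit_def)

lemma copower_map_star: assumes g: "g \<in> hom D X Y" shows "copower_map D g star = g"
proof -
  have XY: "X \<in> obj D" "Y \<in> obj D" using hom_obj[OF g] by auto
  have "g = copower_map D g star"
    by (rule copower_map_unique[OF g]) (use g id_left[OF g] id_right[OF g] in \<open>simp_all add: copower_star\<close>)
  thus ?thesis by simp
qed

lemma natiso_counit: "natiso D D (fcompose D (evf D) (copower_ftor D)) (idf D) (eval_counit D)"
  unfolding natiso_def natural_def
proof (intro conjI ballI allI impI)
  fix X assume X: "X \<in> obj D"
  have e: "fobj (fcompose D (evf D) (copower_ftor D)) X = X" "fobj (idf D) X = X"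
    using X pc_morphism_copower_functor[OF X]
        by (simp_all add: fcompose_def evf_def copower_ftor_def idf_def PCMor_obj copower_functor_def copower_fobj_def copower_star)
  show "eval_counit D X \<in> hom D (fobj (fcompose D (evf D) (copower_ftor D)) X) (fobj (idf D) X)"
      using e X by (auto simp: eval_counit_def)
  show "iso D (eval_counit D X)" using iso_id[OF X] X by (simp add: eval_counit_def)
next
  fix g assume g: "g \<in> arr D"
  have gh: "g \<in> hom D (dom D g) (cod D g)" using g by (simp add: hom_def)
  have o: "dom D g \<in> obj D" "cod D g \<in> obj D" using hom_obj[OF gh] by auto
  have ga: "farr (copower_ftor D) g \<in> arr (PCMor FinSet D)"
      using functor_hom[OF copower_ftor_is_functor gh] by (simp add: hom_def)
  have "farr (fcompose D (evf D) (copower_ftor D)) g = g"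
    using g ga copower_map_star[OF gh] by (simp add: fcompose_def evf_def copower_ftor_def)
  then show "cmp D (eval_counit D (cod D g)) (farr (fcompose D (evf D) (copower_ftor D)) g)
      = cmp D (farr (idf D) g) (eval_counit D (dom D g))"
    using g o id_left[OF gh] id_right[OF gh] by (simp add: eval_counit_def idf_def)
next
  fix X assume "X \<notin> obj D" thus "eval_counit D X = undefined" by (simp add: eval_counit_def)
qed

lemma coproduct_copower_ftor:
  "X \<in> obj D \<Longrightarrow> finite S
      \<Longrightarrow> coproduct D (\<lambda>_. X) S (fobj (fobj (copower_ftor D) X) S) (copower_inj D X S)"
  using coproduct_copower by (simp add: copower_ftor_def copower_functor_def copower_fobj_def)

lemma quasi_inverse_copower_ftor: "quasi_inverse (PCMor FinSet D) D (evf D) (copower_ftor D)"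
  unfolding quasi_inverse_def using copower_ftor_is_functor natiso_unit natiso_counit by blast

end


section \<open>Naturality in the target\<close>

lemma functor_fcompose:
  assumes C: "category C" and F: "is_functor C D F" and H: "is_functor D E H"
  shows "is_functor C E (fcompose C H F)"
proof -
  interpret C: cat C by unfold_locales (rule C)
  show ?thesis
    unfolding is_functor_def
  proof (intro conjI ballI allI impI)
    fix X assume "X \<in> obj C"
    then show "fobj (fcompose C H F) X \<in> obj E"
      "farr (fcompose C H F) (idt C X) = idt E (fobj (fcompose C H F) X)"
      using F H functor_id[OF F] functor_id[OF H] C.id_hom
      by (auto simp: fcompose_def is_functor_def hom_def)
  next
    fix f assume "f \<in> arr C"
    then show "farr (fcompose C H F) f \<in> hom E (fobj (fcompose C H F) (dom C f)) (fobj (fcompose C H F) (cod C f))"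
      using functor_hom[OF H functor_hom[OF F C.arr_hom]] C.hom_obj[OF C.arr_hom]
      by (simp add: fcompose_def)
  next
    fix f g assume "f \<in> arr C" "g \<in> arr C" "cod C f = dom C g"
    then have "f \<in> hom C (dom C f) (cod C f)" "g \<in> hom C (cod C f) (cod C g)"
      by (auto simp: hom_def)
    then show "farr (fcompose C H F) (cmp C g f) = cmp E (farr (fcompose C H F) g) (farr (fcompose C H F) f)"
      using functor_comp[OF F] functor_comp[OF H functor_hom[OF F] functor_hom[OF F]] C.comp_hom
      by (simp add: fcompose_def hom_def)
  qed (simp_all add: fcompose_def)
qed

lemma pc_morphism_fcompose:
  assumes C: "pre_cylinder_category C" and F: "pc_morphism C D F" and H: "pc_morphism D E H"
  shows "pc_morphism C E (fcompose C H F)"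
  unfolding pc_morphism_def
proof (intro conjI allI ballI impI)
  have C': "category C" "cof C \<subseteq> arr C" "weq C \<subseteq> arr C"
    using C unfolding pre_cylinder_category_def cofibration_category_def by simp_all
  show "is_functor C E (fcompose C H F)"
    using functor_fcompose[OF C'(1) pc_morphism_functor[OF F] pc_morphism_functor[OF H]] .
  show "farr (fcompose C H F) f \<in> cof E" if "f \<in> cof C" for f
    using F H that C'(2) unfolding pc_morphism_def by (auto simp: fcompose_def)
  show "farr (fcompose C H F) f \<in> weq E" if "f \<in> weq C" for f
    using F H that C'(3) unfolding pc_morphism_def by (auto simp: fcompose_def)
  show "initial E (fobj (fcompose C H F) I)" if "initial C I" for I
    using F H that unfolding pc_morphism_def by (simp add: fcompose_def initial_def)
  fix i f j k assume po: "pushout C i f j k" and "i \<in> cof C"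
  then have "pushout E (farr H (farr F i)) (farr H (farr F f)) (farr H (farr F j)) (farr H (farr F k))"
    using F H unfolding pc_morphism_def by blast
  moreover have "i \<in> arr C" "f \<in> arr C" "j \<in> arr C" "k \<in> arr C"
    using po unfolding pushout_def by simp_all
  ultimately show "pushout E (farr (fcompose C H F) i) (farr (fcompose C H F) f) (farr (fcompose C H F) j) (farr (fcompose C H F) k)"
    by (simp add: fcompose_def)
qed

lemma natural_fcompose:
  assumes C: "category C" and F: "is_functor C D F" and G: "is_functor C D G"
    and H: "is_functor D E H" and \<eta>: "natural C D F G \<eta>"
  shows "natural C E (fcompose C H F) (fcompose C H G) (\<lambda>X. if X \<in> obj C then farr H (\<eta> X) else undefined)"
  unfolding natural_def
proof (intro conjI ballI allI impI)
  fix X assume "X \<in> obj C"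
  then show "(if X \<in> obj C then farr H (\<eta> X) else undefined) \<in> hom E (fobj (fcompose C H F) X) (fobj (fcompose C H G) X)"
    using functor_hom[OF H natural_hom[OF \<eta>]] by (simp add: fcompose_def)
next
  fix f assume f: "f \<in> arr C"
  let ?X = "dom C f" and ?Y = "cod C f"
  have fh: "f \<in> hom C ?X ?Y" using f by (simp add: hom_def)
  have o: "?X \<in> obj C" "?Y \<in> obj C" using C f unfolding category_def by auto
  have "cmp E (farr H (\<eta> ?Y)) (farr H (farr F f)) = farr H (cmp D (\<eta> ?Y) (farr F f))"
    using functor_comp[OF H functor_hom[OF F fh] natural_hom[OF \<eta> o(2)]] by simp
  also have "\<dots> = farr H (cmp D (farr G f) (\<eta> ?X))" using \<eta> f unfolding natural_def by auto
  also have "\<dots> = cmp E (farr H (farr G f)) (farr H (\<eta> ?X))"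
    using functor_comp[OF H natural_hom[OF \<eta> o(1)] functor_hom[OF G fh]] .
  finally show "cmp E (if ?Y \<in> obj C then farr H (\<eta> ?Y) else undefined) (farr (fcompose C H F) f)
      = cmp E (farr (fcompose C H G) f) (if ?X \<in> obj C then farr H (\<eta> ?X) else undefined)"
    using o f by (simp add: fcompose_def)
qed simp

lemma postc_fobj: "pc_morphism FinSet D F \<Longrightarrow> fobj (postc D D' H) F = fcompose FinSet H F"
  by (simp add: postc_def PCMor_obj)

lemma postc_farr: "(F,G,\<eta>) \<in> arr (PCMor FinSet D)
    \<Longrightarrow> farr (postc D D' H) (F,G,\<eta>)
    = (fcompose FinSet H F, fcompose FinSet H G, \<lambda>X. if X \<in> obj FinSet then farr H (\<eta> X) else undefined)"
  by (simp add: postc_def) (simp only: snd_conv)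

lemma postc_farr_idt:
  assumes D: "category D" and H: "is_functor D D' H" and F: "pc_morphism FinSet D F"
  shows "farr (postc D D' H) (idt (PCMor FinSet D) F) = idt (PCMor FinSet D') (fcompose FinSet H F)"
proof -
  interpret D: cat D by unfold_locales (rule D)
  have "idt (PCMor FinSet D) F \<in> arr (PCMor FinSet D)"
    using D.natural_id[OF category_FinSet pc_morphism_functor[OF F]] F by (simp add: PCMor_idt PCMor_arr)
  then have "farr (postc D D' H) (idt (PCMor FinSet D) F) = (fcompose FinSet H F, fcompose FinSet H F,
      \<lambda>X. if X \<in> obj FinSet then farr H (if X \<in> obj FinSet then idt D (fobj F X) else undefined) else undefined)"
    by (simp only: PCMor_idt postc_farr)
  also have "\<dots> = idt (PCMor FinSet D') (fcompose FinSet H F)"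
  proof -
    have "fobj F X \<in> obj D" if "X \<in> obj FinSet" for X
      using pc_morphism_functor[OF F] that unfolding is_functor_def by blast
    then show ?thesis
      using functor_id[OF H] by (simp add: PCMor_idt fcompose_def cong: if_cong)
  qed
  finally show ?thesis .
qed

lemma postc_farr_cmp:
  assumes D: "category D" and H: "is_functor D D' H"
    and t1: "(F,G,\<eta>) \<in> arr (PCMor FinSet D)" and t2: "(G,K,\<theta>) \<in> arr (PCMor FinSet D)"
  shows "farr (postc D D' H) (cmp (PCMor FinSet D) (G,K,\<theta>) (F,G,\<eta>))
    = cmp (PCMor FinSet D') (farr (postc D D' H) (G,K,\<theta>)) (farr (postc D D' H) (F,G,\<eta>))"
proof -
  interpret D: cat D by unfold_locales (rule D)
  have a: "pc_morphism FinSet D F" "pc_morphism FinSet D G" "pc_morphism FinSet D K"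
    "natural FinSet D F G \<eta>" "natural FinSet D G K \<theta>"
    using t1 t2 by (auto simp: PCMor_arr)
  have "cmp (PCMor FinSet D) (G,K,\<theta>) (F,G,\<eta>) \<in> arr (PCMor FinSet D)"
    using D.natural_comp[OF category_FinSet pc_morphism_functor[OF a(1)] pc_morphism_functor[OF a(2)]
        pc_morphism_functor[OF a(3)] a(4,5)] a
    by (simp add: PCMor_cmp PCMor_arr)
  then have "farr (postc D D' H) (cmp (PCMor FinSet D) (G,K,\<theta>) (F,G,\<eta>)) = (fcompose FinSet H F, fcompose FinSet H K,
      \<lambda>X. if X \<in> obj FinSet then farr H (if X \<in> obj FinSet then cmp D (\<theta> X) (\<eta> X) else undefined) else undefined)"
    by (simp only: PCMor_cmp postc_farr)
  also have "\<dots> = cmp (PCMor FinSet D') (farr (postc D D' H) (G,K,\<theta>)) (farr (postc D D' H) (F,G,\<eta>))"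
  proof -
    have "farr H (cmp D (\<theta> X) (\<eta> X)) = cmp D' (farr H (\<theta> X)) (farr H (\<eta> X))" if "X \<in> obj FinSet" for X
      using functor_comp[OF H natural_hom[OF a(4) that] natural_hom[OF a(5) that]] .
    then show ?thesis
      using t1 t2 by (simp add: PCMor_cmp postc_farr cong: if_cong)
  qed
  finally show ?thesis .
qed

lemma postc_is_functor:
  assumes D: "category D" and H: "pc_morphism D D' H"
  shows "is_functor (PCMor FinSet D) (PCMor FinSet D') (postc D D' H)"
  unfolding is_functor_def
proof (intro conjI ballI allI impI)
  note Hf = pc_morphism_functor[OF H]
  have pcF: "pc_morphism FinSet D' (fcompose FinSet H F)" if "pc_morphism FinSet D F" for F
    using pc_morphism_fcompose[OF pre_cylinder_category_FinSet that H] .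
  fix F assume "F \<in> obj (PCMor FinSet D)"
  then have F: "pc_morphism FinSet D F" by (simp add: PCMor_obj)
  show "fobj (postc D D' H) F \<in> obj (PCMor FinSet D')"
    using pcF[OF F] by (simp add: postc_fobj[OF F] PCMor_obj)
  show "farr (postc D D' H) (idt (PCMor FinSet D) F) = idt (PCMor FinSet D') (fobj (postc D D' H) F)"
    using postc_farr_idt[OF D Hf F] by (simp add: postc_fobj[OF F])
next
  fix t assume t: "t \<in> arr (PCMor FinSet D)"
  obtain F G \<eta> where tt: "t = (F,G,\<eta>)" by (cases t)
  have a: "pc_morphism FinSet D F" "pc_morphism FinSet D G" "natural FinSet D F G \<eta>"
    using t tt by (auto simp: PCMor_arr)
  show "farr (postc D D' H) t \<in> hom (PCMor FinSet D') (fobj (postc D D' H) (dom (PCMor FinSet D) t))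
      (fobj (postc D D' H) (cod (PCMor FinSet D) t))"
    using t tt a pc_morphism_fcompose[OF pre_cylinder_category_FinSet _ H]
      natural_fcompose[OF category_FinSet pc_morphism_functor[OF a(1)] pc_morphism_functor[OF a(2)]
        pc_morphism_functor[OF H] a(3)]
    by (simp add: postc_farr postc_fobj PCMor_hom PCMor_dom PCMor_cod)
next
  fix t1 t2 assume t1: "t1 \<in> arr (PCMor FinSet D)" and t2: "t2 \<in> arr (PCMor FinSet D)"
    and "cod (PCMor FinSet D) t1 = dom (PCMor FinSet D) t2"
  moreover obtain F G \<eta> where "t1 = (F,G,\<eta>)" by (cases t1)
  moreover obtain G' K \<theta> where "t2 = (G',K,\<theta>)" by (cases t2)
  ultimately show "farr (postc D D' H) (cmp (PCMor FinSet D) t2 t1)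
      = cmp (PCMor FinSet D') (farr (postc D D' H) t2) (farr (postc D D' H) t1)"
    using postc_farr_cmp[OF D pc_morphism_functor[OF H]] by (simp add: PCMor_dom PCMor_cod)
qed (simp_all add: postc_def)

lemma evf_postc:
  assumes "category D" "pc_morphism D D' H"
  shows "fcompose (PCMor FinSet D) (evf D') (postc D D' H) = fcompose (PCMor FinSet D) H (evf D)"
proof -
  have "fobj (postc D D' H) F \<in> obj (PCMor FinSet D')" if "F \<in> obj (PCMor FinSet D)" for F
    using postc_is_functor[OF assms] that unfolding is_functor_def by blast
  moreover have "farr (postc D D' H) t \<in> arr (PCMor FinSet D')" if "t \<in> arr (PCMor FinSet D)" for t
    using postc_is_functor[OF assms] that unfolding is_functor_def hom_def by blast
  ultimately show ?thesis
    unfolding fcompose_def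
    by (auto intro!: ext simp: evf_def postc_fobj PCMor_obj postc_farr fcompose_def star_def)
qed

theorem mainTheorem11:
  shows "pre_cylinder_category FinSet \<and>
    (\<forall>D :: ('o,'a) pccat. pre_cylinder_category D \<longrightarrow>
       is_functor (PCMor FinSet D) D (evf D) \<and>
       (\<exists>G. quasi_inverse (PCMor FinSet D) D (evf D) G \<and>
            (\<forall>X\<in>obj D. \<forall>S. finite S \<longrightarrow>
                (\<exists>j. coproduct D (\<lambda>s. X) S (fobj (fobj G X) S) j)))) \<and>
    (\<forall>(D :: ('o,'a) pccat) (D' :: ('o2,'a2) pccat) H.
       pre_cylinder_category D \<longrightarrow> pre_cylinder_category D' \<longrightarrow> pc_morphism D D' H \<longrightarrow>
       is_functor (PCMor FinSet D) (PCMor FinSet D') (postc D D' H) \<and>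
       fcompose (PCMor FinSet D) (evf D') (postc D D' H) = fcompose (PCMor FinSet D) H (evf D))"
proof (intro conjI allI impI)
  show "pre_cylinder_category FinSet" by (rule pre_cylinder_category_FinSet)
next
  fix D :: "('o,'a) pccat" assume "pre_cylinder_category D"
  then interpret pre_cylinder D by (rule pre_cylinder.intro)
  show "is_functor (PCMor FinSet D) D (evf D)" by (rule evf_is_functor)
  show "\<exists>G. quasi_inverse (PCMor FinSet D) D (evf D) G \<and>
      (\<forall>X\<in>obj D. \<forall>S. finite S \<longrightarrow> (\<exists>j. coproduct D (\<lambda>s. X) S (fobj (fobj G X) S) j))"
    using quasi_inverse_copower_ftor coproduct_copower_ftor by blast
next
  fix D :: "('o,'a) pccat" and D' :: "('o2,'a2) pccat" and H
  assume "pre_cylinder_category D" and "pc_morphism D D' H"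
  then have D: "category D"
    unfolding pre_cylinder_category_def cofibration_category_def by blast
  show "is_functor (PCMor FinSet D) (PCMor FinSet D') (postc D D' H)"
    by (rule postc_is_functor[OF D \<open>pc_morphism D D' H\<close>])
  show "fcompose (PCMor FinSet D) (evf D') (postc D D' H) = fcompose (PCMor FinSet D) H (evf D)"
    by (rule evf_postc[OF D \<open>pc_morphism D D' H\<close>])
qed

end
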